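(* In the finite element setting described in the context (linear hexahedral elements for 3D elasticity, $m=24$), let $\beta\ge0$ and, for each element $e$ with mass $m_e>0$, $$M_e=I_3\otimes\tfrac{m_e}{8}I_8,\qquad E_e=I_3\otimes \mathrm{E}_e,\quad \mathrm{E}_e=\frac{\beta m_e}{32}(A\otimes G),$$ with $$A=\begin{pmatrix}1&-1\\-1&1\end{pmatrix},\qquad G=\begin{pmatrix}4&2&1&2\\2&4&2&1\\1&2&4&2\\2&1&2&4\end{pmatrix},$$ and $\overline{M}_e=M_e+E_e$. Let $M=\sum_eL_e^TM_eL_e$ and $\overline{M}=\sum_eL_e^T\overline{M}_eL_e$. Then for all $i=1,\dots,n$, $$1\le\frac{\omega_i}{\overline{\omega}_i}\le\sqrt{1+\tfrac{9}{2}\beta},\qquad \frac{\kappa(\overline{M})}{\kappa(M)}\le1+\tfrac92\beta,$$ where $\omega_i=\sqrt{\lambda_i(K,M)}$, $\overline{\omega}_i=\sqrt{\lambda_i(K,\overline{M})}$.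
   Context: Finite element setting: there are $n$ global degrees of freedom and $N$ elements, each with $m$ local degrees of freedom. For each element $e$, $L_e\in\mathbb{R}^{m\times n}$ satisfies $L_e^T=[\mathbf{e}_{i_1},\dots,\mathbf{e}_{i_m}]$ for distinct indices (columns of $I_n$), and every global index appears for at least one element. Element matrices are assembled as $A=\sum_{e=1}^N L_e^TA_eL_e$. The global stiffness matrix is $K=\sum_e L_e^TK_eL_e$ with each $K_e$ symmetric positive semidefinite, and $K$ is assumed symmetric positive definite. Generalized eigenvalues of a pair are numbered in ascending order. $\kappa(A)=\lambda_{\max}(A)/\lambda_{\min}(A)$ for symmetric positive definite $A$; $\otimes$ is the Kronecker product. *)

theory Defs
  imports "Jordan_Normal_Form.Determinant"
begin

definition psd_mat :: "real mat \<Rightarrow> bool" where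
  "psd_mat A \<longleftrightarrow> A \<in> carrier_mat (dim_row A) (dim_row A) \<and> transpose_mat A = A \<and>
     (\<forall>x \<in> carrier_vec (dim_row A). x \<bullet> (A *\<^sub>v x) \<ge> 0)"

definition spd_mat :: "real mat \<Rightarrow> bool" where
  "spd_mat A \<longleftrightarrow> A \<in> carrier_mat (dim_row A) (dim_row A) \<and> transpose_mat A = A \<and>
     (\<forall>x \<in> carrier_vec (dim_row A). x \<noteq> 0\<^sub>v (dim_row A) \<longrightarrow> x \<bullet> (A *\<^sub>v x) > 0)"

definition kron :: "real mat \<Rightarrow> real mat \<Rightarrow> real mat" where
  "kron A B = mat (dim_row A * dim_row B) (dim_col A * dim_col B)
     (\<lambda>(i,j). A $$ (i div dim_row B, j div dim_col B) * B $$ (i mod dim_row B, j mod dim_col B))"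

(* Boolean restriction/gather matrix L_e (m x n): row k is e_{idx k}^T *)
definition gather_mat :: "nat \<Rightarrow> nat \<Rightarrow> (nat \<Rightarrow> nat) \<Rightarrow> real mat" where
  "gather_mat m n idx = mat m n (\<lambda>(k,j). if j = idx k then 1 else 0)"

definition assemble :: "nat \<Rightarrow> nat \<Rightarrow> nat \<Rightarrow> (nat \<Rightarrow> nat \<Rightarrow> nat) \<Rightarrow> (nat \<Rightarrow> real mat) \<Rightarrow> real mat" where
  "assemble m n N idx Ae = mat n n (\<lambda>(i,j). \<Sum>e<N.
      (transpose_mat (gather_mat m n (idx e)) * Ae e * gather_mat m n (idx e)) $$ (i,j))"

definition gen_eigs :: "real mat \<Rightarrow> real mat \<Rightarrow> real list" where
  "gen_eigs K M = (THE ls. length ls = dim_row K \<and> sorted ls \<and>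
      (\<forall>x::real. det (x \<cdot>\<^sub>m M - K) = det M * prod_list (map (\<lambda>l. x - l) ls)))"

definition eigs :: "real mat \<Rightarrow> real list" where
  "eigs A = gen_eigs A (1\<^sub>m (dim_row A))"

definition cond_num :: "real mat \<Rightarrow> real" where
  "cond_num A = last (eigs A) / hd (eigs A)"

definition A2 :: "real mat" where
  "A2 = mat_of_rows_list 2 [[1,-1],[-1,1]]"

definition G4 :: "real mat" where
  "G4 = mat_of_rows_list 4 [[4,2,1,2],[2,4,2,1],[1,2,4,2],[2,1,2,4]]"

definition lumped_mass :: "real \<Rightarrow> real mat" where
  "lumped_mass me = kron (1\<^sub>m 3) ((me / 8) \<cdot>\<^sub>m 1\<^sub>m 8)"

definition mass_correction :: "real \<Rightarrow> real \<Rightarrow> real mat" where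
  "mass_correction \<beta> me = kron (1\<^sub>m 3) ((\<beta> * me / 32) \<cdot>\<^sub>m kron A2 G4)"

end

theory Submission
  imports Defs "Jordan_Normal_Form.Spectral_Radius"
begin

text \<open>
  On each element the lumped mass matrix is m_e/8 times the identity, while on each of the three
  displacement blocks the correction is (beta m_e / 32) (A \<otimes> G); as A has eigenvalues 0, 2 and the
  circulant G has eigenvalues 1, 3, 3, 9, the correction lies between 0 and (9/2) beta times the
  lumped mass in the sense of quadratic forms. Assembly preserves this, so
  x^T M x \<le> x^T Mbar x \<le> (1 + 9 beta / 2) x^T M x.

  Generalized eigenvalues are then compared by the Courant-Fischer argument: an M-orthonormal
  eigenbasis of a symmetric-definite pencil is built by deflation, which identifies its
  eigenvalues with the roots of det (x M - K); for two pencils a nonzero vector in the span of the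
  first i+1 eigenvectors of one and of the last n-i eigenvectors of the other compares their i-th
  eigenvalues through its Rayleigh quotients. With K fixed this gives
  lambda_i(K, Mbar) \<le> lambda_i(K, M) \<le> (1 + 9 beta / 2) lambda_i(K, Mbar); with the identity as
  second matrix it compares the extreme eigenvalues of M and Mbar, hence their condition numbers.
  Only the positive definiteness of K enters: the element stiffness matrices and the injectivity
  of the local-to-global index maps are not used.
\<close>

section \<open>Quadratic forms and symmetric positive definite matrices\<close>

lemma scalar_prod_self_pos:
  fixes x :: "real vec"
  assumes "x \<in> carrier_vec n" and "x \<noteq> 0\<^sub>v n"
  shows "x \<bullet> x > 0"
  using conjugate_square_greater_0_vec[OF assms(1)] assms(2) by simp

lemma scalar_prod_self_nonneg: "(x :: real vec) \<bullet> x \<ge> 0"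
  using conjugate_square_ge_0_vec[of x] by simp

lemma smult_mat_mult_vec:
  fixes M :: "real mat"
  assumes "M \<in> carrier_mat m n" and "w \<in> carrier_vec n"
  shows "(c \<cdot>\<^sub>m M) *\<^sub>v w = c \<cdot>\<^sub>v (M *\<^sub>v w)"
  using assms by (intro eq_vecI) (auto simp: scalar_prod_def sum_distrib_left mult.assoc)

lemma quad_form_double_sum:
  fixes S :: "real mat"
  assumes "S \<in> carrier_mat n n" and "x \<in> carrier_vec n"
  shows "x \<bullet> (S *\<^sub>v x) = (\<Sum>i<n. \<Sum>j<n. x $ i * S $$ (i, j) * x $ j)"
  using assms by (simp add: scalar_prod_def atLeast0LessThan sum_distrib_left mult.assoc)

lemma sym_mat_scalar_prod_comm:
  fixes S :: "real mat"
  assumes S: "S \<in> carrier_mat n n" "transpose_mat S = S"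
    and x: "x \<in> carrier_vec n" and y: "y \<in> carrier_vec n"
  shows "x \<bullet> (S *\<^sub>v y) = y \<bullet> (S *\<^sub>v x)"
  using transpose_vec_mult_scalar[OF S(1) y x] S x y by (metis comm_scalar_prod mult_mat_vec_carrier)

lemma congruence_carrier:
  assumes "B \<in> carrier_mat m n" and "S \<in> carrier_mat m m"
  shows "transpose_mat B * S * B \<in> carrier_mat n n"
  using assms by (meson mult_carrier_mat transpose_carrier_mat)

lemma congruence_mult_vec:
  fixes B S :: "real mat"
  assumes B: "B \<in> carrier_mat m n" and S: "S \<in> carrier_mat m m" and z: "z \<in> carrier_vec n"
  shows "(transpose_mat B * S * B) *\<^sub>v z = transpose_mat B *\<^sub>v (S *\<^sub>v (B *\<^sub>v z))"
proof -
  have "(transpose_mat B * S * B) *\<^sub>v z = (transpose_mat B * S) *\<^sub>v (B *\<^sub>v z)"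
    using B S z by (intro assoc_mult_mat_vec) auto
  also have "\<dots> = transpose_mat B *\<^sub>v (S *\<^sub>v (B *\<^sub>v z))"
    using B S z by (intro assoc_mult_mat_vec) auto
  finally show ?thesis .
qed

lemma congruence_scalar_prod:
  fixes B S :: "real mat"
  assumes B: "B \<in> carrier_mat m n" and S: "S \<in> carrier_mat m m"
    and z: "z \<in> carrier_vec n" and z': "z' \<in> carrier_vec n"
  shows "z \<bullet> ((transpose_mat B * S * B) *\<^sub>v z') = (B *\<^sub>v z) \<bullet> (S *\<^sub>v (B *\<^sub>v z'))"
proof -
  have "z \<bullet> ((transpose_mat B * S * B) *\<^sub>v z') = (S *\<^sub>v (B *\<^sub>v z')) \<bullet> (B *\<^sub>v z)"
    using congruence_mult_vec[OF B S z'] transpose_vec_mult_scalar[OF B z, of "S *\<^sub>v (B *\<^sub>v z')"] B S z z'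
    by (simp add: comm_scalar_prod[of z n])
  also have "\<dots> = (B *\<^sub>v z) \<bullet> (S *\<^sub>v (B *\<^sub>v z'))"
    using B S z z' by (intro comm_scalar_prod[of _ m]) auto
  finally show ?thesis .
qed

lemma congruence_sym:
  fixes B S :: "real mat"
  assumes B: "B \<in> carrier_mat m n" and S: "S \<in> carrier_mat m m" "transpose_mat S = S"
  shows "transpose_mat (transpose_mat B * S * B) = transpose_mat B * S * B"
proof -
  have BT: "transpose_mat B \<in> carrier_mat n m" using B by simp
  have "transpose_mat (transpose_mat B * S * B) = transpose_mat B * transpose_mat (transpose_mat B * S)"
    using BT S B by (intro transpose_mult) auto
  also have "\<dots> = transpose_mat B * (S * B)"
    using transpose_mult[OF BT S(1)] S by simp
  finally show ?thesis using assoc_mult_mat[OF BT S(1) B] by simp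
qed

lemma spd_matI:
  assumes "S \<in> carrier_mat n n" and "transpose_mat S = S"
    and "\<And>x. x \<in> carrier_vec n \<Longrightarrow> x \<noteq> 0\<^sub>v n \<Longrightarrow> x \<bullet> (S *\<^sub>v x) > 0"
  shows "spd_mat S"
  using assms by (auto simp: spd_mat_def)

lemma spd_mat_sym: "spd_mat S \<Longrightarrow> transpose_mat S = S"
  by (simp add: spd_mat_def)

lemma spd_mat_pos:
  assumes "spd_mat S" and "S \<in> carrier_mat n n" and "x \<in> carrier_vec n" and "x \<noteq> 0\<^sub>v n"
  shows "x \<bullet> (S *\<^sub>v x) > 0"
  using assms by (auto simp: spd_mat_def)

lemma spd_mat_nonneg:
  assumes "spd_mat S" and "S \<in> carrier_mat n n" and "x \<in> carrier_vec n"
  shows "x \<bullet> (S *\<^sub>v x) \<ge> 0"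
  using spd_mat_pos[OF assms] assms(2) by (cases "x = 0\<^sub>v n") auto

lemma spd_mat_psd_mat:
  assumes "spd_mat S"
  shows "psd_mat S"
proof -
  have S: "S \<in> carrier_mat (dim_row S) (dim_row S)" using assms by (simp add: spd_mat_def)
  show ?thesis
    unfolding psd_mat_def using S spd_mat_sym[OF assms] spd_mat_nonneg[OF assms S] by blast
qed

lemma spd_mat_det_nonzero:
  assumes "spd_mat S" and S: "S \<in> carrier_mat n n"
  shows "det S \<noteq> 0"
proof
  assume "det S = 0"
  then obtain v where "v \<in> carrier_vec n" "v \<noteq> 0\<^sub>v n" "S *\<^sub>v v = 0\<^sub>v n"
    using det_0_iff_vec_prod_zero[OF S] by auto
  with spd_mat_pos[OF assms] show False by fastforce
qed

lemma spd_mat_one: "spd_mat (1\<^sub>m n)"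
  by (rule spd_matI[of _ n]) (auto intro: scalar_prod_self_pos)

lemma spd_mat_congruence:
  fixes B S :: "real mat"
  assumes S: "spd_mat S" "S \<in> carrier_mat m m" and B: "B \<in> carrier_mat m n"
    and inj: "\<And>z. z \<in> carrier_vec n \<Longrightarrow> B *\<^sub>v z = 0\<^sub>v m \<Longrightarrow> z = 0\<^sub>v n"
  shows "spd_mat (transpose_mat B * S * B)"
proof (rule spd_matI)
  show "transpose_mat B * S * B \<in> carrier_mat n n" using B S by simp
  show "transpose_mat (transpose_mat B * S * B) = transpose_mat B * S * B"
    by (rule congruence_sym[OF B S(2) spd_mat_sym[OF S(1)]])
  fix z :: "real vec" assume "z \<in> carrier_vec n" "z \<noteq> 0\<^sub>v n"
  then show "z \<bullet> ((transpose_mat B * S * B) *\<^sub>v z) > 0"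
    using congruence_scalar_prod[OF B S(2)] spd_mat_pos[OF S, of "B *\<^sub>v z"] inj B by auto
qed

lemma spd_mat_mono:
  fixes S T :: "real mat"
  assumes S: "spd_mat S" "S \<in> carrier_mat n n" and T: "T \<in> carrier_mat n n" "transpose_mat T = T"
    and le: "\<And>x. x \<in> carrier_vec n \<Longrightarrow> x \<bullet> (S *\<^sub>v x) \<le> x \<bullet> (T *\<^sub>v x)"
  shows "spd_mat T"
  using spd_mat_pos[OF S] le by (intro spd_matI[OF T]) (meson less_le_trans)

section \<open>An M-orthonormal eigenbasis of a symmetric-definite pencil\<close>

lemma real_mat_complex_eigenvector:
  fixes C :: "real mat"
  assumes C: "C \<in> carrier_mat n n" and n: "n > 0"
  obtains z w where "w \<in> carrier_vec n" "w \<noteq> 0\<^sub>v n" "map_mat complex_of_real C *\<^sub>v w = z \<cdot>\<^sub>v w"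
proof -
  obtain z where "z \<in> spectrum (map_mat complex_of_real C)"
    using spectrum_non_empty[of _ n] C n by fastforce
  then show thesis
    using that C unfolding spectrum_def eigenvalue_def eigenvector_def by auto
qed

lemma complex_vec_eq_zero_iff_Re_Im:
  assumes "w \<in> carrier_vec n"
  shows "w = 0\<^sub>v n \<longleftrightarrow> map_vec Re w = 0\<^sub>v n \<and> map_vec Im w = 0\<^sub>v n"
  using assms by (auto simp: vec_eq_iff complex_eq_iff)

lemma complex_eigenvector_Re_Im:
  fixes C :: "real mat" and w :: "complex vec"
  assumes C: "C \<in> carrier_mat n n" and w: "w \<in> carrier_vec n"
    and ev: "map_mat complex_of_real C *\<^sub>v w = z \<cdot>\<^sub>v w"
  shows "C *\<^sub>v map_vec Re w = Re z \<cdot>\<^sub>v map_vec Re w - Im z \<cdot>\<^sub>v map_vec Im w"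
    and "C *\<^sub>v map_vec Im w = Im z \<cdot>\<^sub>v map_vec Re w + Re z \<cdot>\<^sub>v map_vec Im w"
proof -
  have row: "(\<Sum>j<n. complex_of_real (C $$ (i, j)) * w $ j) = z * w $ i" if "i < n" for i
    using arg_cong[OF ev, of "\<lambda>v. v $ i"] C w that
    by (simp add: scalar_prod_def atLeast0LessThan)
  show "C *\<^sub>v map_vec Re w = Re z \<cdot>\<^sub>v map_vec Re w - Im z \<cdot>\<^sub>v map_vec Im w"
    using C w arg_cong[OF row, where f=Re]
    by (intro eq_vecI) (auto simp: scalar_prod_def atLeast0LessThan Re_sum)
  show "C *\<^sub>v map_vec Im w = Im z \<cdot>\<^sub>v map_vec Re w + Re z \<cdot>\<^sub>v map_vec Im w"
    using C w arg_cong[OF row, where f=Im]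
    by (intro eq_vecI) (auto simp: scalar_prod_def atLeast0LessThan Im_sum)
qed

lemma gen_eigenpair_exists:
  fixes K M :: "real mat"
  assumes K: "K \<in> carrier_mat n n" "transpose_mat K = K"
    and M: "spd_mat M" "M \<in> carrier_mat n n" and n: "n > 0"
  shows "\<exists>l v. v \<in> carrier_vec n \<and> v \<noteq> 0\<^sub>v n \<and> K *\<^sub>v v = l \<cdot>\<^sub>v (M *\<^sub>v v)"
proof -
  obtain Mi where Mi: "Mi \<in> carrier_mat n n" "M * Mi = 1\<^sub>m n"
    using det_non_zero_imp_unit[OF M(2) spd_mat_det_nonzero[OF M]]
    unfolding Units_def by (auto simp: ring_mat_simps)
  define C where "C = Mi * K"
  have C: "C \<in> carrier_mat n n" using Mi K by (simp add: C_def)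
  have "M * C = K" unfolding C_def using Mi K M by (metis assoc_mult_mat left_mult_one_mat)
  then have MC: "M *\<^sub>v (C *\<^sub>v x) = K *\<^sub>v x" if "x \<in> carrier_vec n" for x
    using assoc_mult_mat_vec[OF M(2) C that] by simp
  obtain z w where w: "w \<in> carrier_vec n" "w \<noteq> 0\<^sub>v n"
    and ev: "map_mat complex_of_real C *\<^sub>v w = z \<cdot>\<^sub>v w"
    using real_mat_complex_eigenvector[OF C n] .
  define a where "a = map_vec Re w"
  define b where "b = map_vec Im w"
  have a: "a \<in> carrier_vec n" and b: "b \<in> carrier_vec n" using w by (auto simp: a_def b_def)
  note Cab = complex_eigenvector_Re_Im[OF C w(1) ev, folded a_def b_def]
  have Ka: "K *\<^sub>v a = Re z \<cdot>\<^sub>v (M *\<^sub>v a) - Im z \<cdot>\<^sub>v (M *\<^sub>v b)"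
    using MC[OF a] Cab(1) M a b by (simp add: mult_minus_distrib_mat_vec mult_mat_vec)
  have Kb: "K *\<^sub>v b = Im z \<cdot>\<^sub>v (M *\<^sub>v a) + Re z \<cdot>\<^sub>v (M *\<^sub>v b)"
    using MC[OF b] Cab(2) M a b by (simp add: mult_add_distrib_mat_vec mult_mat_vec)
  \<comment> \<open>symmetry of K and M forces the eigenvalue to be real\<close>
  have "Im z * (a \<bullet> (M *\<^sub>v a) + b \<bullet> (M *\<^sub>v b)) = 0"
    using arg_cong[OF Ka, of "\<lambda>x. b \<bullet> x"] arg_cong[OF Kb, of "\<lambda>x. a \<bullet> x"]
      sym_mat_scalar_prod_comm[OF K a b] sym_mat_scalar_prod_comm[OF M(2) spd_mat_sym[OF M(1)] a b] M a b
    by (simp add: scalar_prod_minus_distrib[of _ n] scalar_prod_add_distrib[of _ n]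
        scalar_prod_smult_distrib[of _ n] algebra_simps)
  moreover have ab: "a \<noteq> 0\<^sub>v n \<or> b \<noteq> 0\<^sub>v n"
    using complex_vec_eq_zero_iff_Re_Im[OF w(1)] w(2) by (simp add: a_def b_def)
  moreover have "x \<bullet> (M *\<^sub>v x) \<ge> 0" if "x \<in> carrier_vec n" for x
    using spd_mat_nonneg[OF M that] .
  ultimately have "Im z = 0"
    using spd_mat_pos[OF M a] spd_mat_pos[OF M b] a b by (smt (verit) mult_eq_0_iff)
  then have "K *\<^sub>v a = Re z \<cdot>\<^sub>v (M *\<^sub>v a)" "K *\<^sub>v b = Re z \<cdot>\<^sub>v (M *\<^sub>v b)"
    using Ka Kb M a b by auto
  then show ?thesis using ab a b by blast
qed

definition gen_eigensystem :: "nat \<Rightarrow> real mat \<Rightarrow> real mat \<Rightarrow> (real \<times> real vec) list \<Rightarrow> bool" where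
  "gen_eigensystem n K M ps \<longleftrightarrow> length ps = n \<and>
     (\<forall>j<n. snd (ps ! j) \<in> carrier_vec n \<and> K *\<^sub>v snd (ps ! j) = fst (ps ! j) \<cdot>\<^sub>v (M *\<^sub>v snd (ps ! j))) \<and>
     (\<forall>j<n. \<forall>k<n. snd (ps ! j) \<bullet> (M *\<^sub>v snd (ps ! k)) = (if j = k then 1 else 0))"

definition skip_index :: "nat \<Rightarrow> nat \<Rightarrow> nat" where
  "skip_index p k = (if k < p then k else Suc k)"

(* For u $ p \<noteq> 0, column k is e_q - (u $ q / u $ p) e_p with q = skip_index p k; these n columns
   form a basis of the orthogonal complement of u. *)
definition deflation_mat :: "nat \<Rightarrow> nat \<Rightarrow> real vec \<Rightarrow> real mat" where
  "deflation_mat n p u = mat (Suc n) n (\<lambda>(r, k).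
     (if r = skip_index p k then 1 else 0) - (if r = p then u $ skip_index p k / u $ p else 0))"

lemma skip_index_neq: "skip_index p k \<noteq> p"
  by (simp add: skip_index_def)

lemma skip_index_eq_iff: "skip_index p k = skip_index p j \<longleftrightarrow> k = j"
  by (auto simp: skip_index_def)

lemma skip_index_less: "k < n \<Longrightarrow> p < Suc n \<Longrightarrow> skip_index p k < Suc n"
  by (auto simp: skip_index_def)

lemma skip_index_surj: "q < Suc n \<Longrightarrow> q \<noteq> p \<Longrightarrow> p < Suc n \<Longrightarrow> \<exists>k<n. q = skip_index p k"
  by (rule exI[of _ "if q < p then q else q - 1"]) (auto simp: skip_index_def)

lemma deflation_mat_carrier: "deflation_mat n p u \<in> carrier_mat (Suc n) n"
  by (simp add: deflation_mat_def)

lemma deflation_mat_mult_vec_skip_index: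
  assumes z: "z \<in> carrier_vec n" and p: "p < Suc n" and j: "j < n"
  shows "(deflation_mat n p u *\<^sub>v z) $ skip_index p j = z $ j"
proof -
  have "(deflation_mat n p u *\<^sub>v z) $ skip_index p j
      = (\<Sum>k<n. (if skip_index p j = skip_index p k then 1 else 0) * z $ k)"
    using z skip_index_less[OF j p]
    by (simp add: deflation_mat_def scalar_prod_def atLeast0LessThan skip_index_neq)
  also have "\<dots> = (\<Sum>k<n. if k = j then z $ k else 0)"
    by (rule sum.cong) (auto simp: skip_index_eq_iff)
  finally show ?thesis using j by simp
qed

lemma transpose_deflation_mat_mult_vec:
  assumes r: "r \<in> carrier_vec (Suc n)" and p: "p < Suc n" and k: "k < n"
  shows "(transpose_mat (deflation_mat n p u) *\<^sub>v r) $ k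
    = r $ skip_index p k - u $ skip_index p k * r $ p / u $ p"
proof -
  let ?q = "skip_index p k"
  have "(transpose_mat (deflation_mat n p u) *\<^sub>v r) $ k =
      (\<Sum>s<Suc n. ((if s = ?q then 1 else 0) - (if s = p then u $ ?q / u $ p else 0)) * r $ s)"
    using r k by (simp add: deflation_mat_def scalar_prod_def atLeast0LessThan col_def)
  also have "\<dots> = (\<Sum>s<Suc n. (if s = ?q then r $ s else 0))
      - (\<Sum>s<Suc n. (if s = p then u $ ?q / u $ p * r $ s else 0))"
    unfolding sum_subtractf[symmetric] by (rule sum.cong) auto
  also have "\<dots> = r $ ?q - u $ ?q * r $ p / u $ p"
    using skip_index_less[OF k p] p by simp
  finally show ?thesis .
qed

lemma deflation_mat_inj:
  assumes p: "p < Suc n" and z: "z \<in> carrier_vec n"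
    and Bz: "deflation_mat n p u *\<^sub>v z = 0\<^sub>v (Suc n)"
  shows "z = 0\<^sub>v n"
proof (rule eq_vecI)
  fix j assume "j < dim_vec (0\<^sub>v n :: real vec)"
  then have j: "j < n" by simp
  show "z $ j = 0\<^sub>v n $ j"
    using deflation_mat_mult_vec_skip_index[OF z p j, of u] Bz skip_index_less[OF j p] j by simp
qed (use z in simp)

lemma deflation_mat_orthogonal:
  assumes u: "u \<in> carrier_vec (Suc n)" and p: "p < Suc n" "u $ p \<noteq> 0"
    and z: "z \<in> carrier_vec n"
  shows "u \<bullet> (deflation_mat n p u *\<^sub>v z) = 0"
proof -
  have "transpose_mat (deflation_mat n p u) *\<^sub>v u = 0\<^sub>v n"
    using transpose_deflation_mat_mult_vec[OF u p(1)] p u by (intro eq_vecI) (auto simp: deflation_mat_def)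
  then show ?thesis
    using transpose_vec_mult_scalar[OF deflation_mat_carrier[of n p u] z u] z by simp
qed

lemma transpose_deflation_mat_kernel:
  assumes u: "u \<in> carrier_vec (Suc n)" and p: "p < Suc n" "u $ p \<noteq> 0"
    and r: "r \<in> carrier_vec (Suc n)" and ker: "transpose_mat (deflation_mat n p u) *\<^sub>v r = 0\<^sub>v n"
  shows "r = (r $ p / u $ p) \<cdot>\<^sub>v u"
proof (rule eq_vecI)
  fix q assume "q < dim_vec ((r $ p / u $ p) \<cdot>\<^sub>v u)"
  then have q: "q < Suc n" using u by simp
  show "r $ q = ((r $ p / u $ p) \<cdot>\<^sub>v u) $ q"
  proof (cases "q = p")
    case False
    then obtain k where k: "k < n" "q = skip_index p k" using skip_index_surj[OF q _ p(1)] by blast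
    then show ?thesis
      using arg_cong[OF ker, of "\<lambda>x. x $ k"] transpose_deflation_mat_mult_vec[OF r p(1) k(1)] p q u
      by simp
  qed (use p u in simp)
qed (use u r in simp)

lemma deflation_exists:
  fixes u :: "real vec"
  assumes u: "u \<in> carrier_vec (Suc n)" "u \<noteq> 0\<^sub>v (Suc n)"
  shows "\<exists>B \<in> carrier_mat (Suc n) n. (\<forall>z \<in> carrier_vec n. B *\<^sub>v z = 0\<^sub>v (Suc n) \<longrightarrow> z = 0\<^sub>v n)
    \<and> (\<forall>z \<in> carrier_vec n. u \<bullet> (B *\<^sub>v z) = 0)
    \<and> (\<forall>r \<in> carrier_vec (Suc n). transpose_mat B *\<^sub>v r = 0\<^sub>v n \<longrightarrow> (\<exists>c. r = c \<cdot>\<^sub>v u))"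
proof -
  obtain p where p: "p < Suc n" "u $ p \<noteq> 0"
    using u by (metis carrier_vecD eq_vecI index_zero_vec)
  show ?thesis
    using deflation_mat_carrier deflation_mat_inj[OF p(1)] deflation_mat_orthogonal[OF u(1) p]
      transpose_deflation_mat_kernel[OF u(1) p] by blast
qed

lemma deflation_lift_eigenvector:
  fixes K M B :: "real mat"
  assumes K: "K \<in> carrier_mat (Suc n) (Suc n)" and M: "M \<in> carrier_mat (Suc n) (Suc n)"
    and v: "v \<in> carrier_vec (Suc n)" "v \<bullet> (M *\<^sub>v v) = 1"
    and B: "B \<in> carrier_mat (Suc n) n"
    and ker: "\<And>r. r \<in> carrier_vec (Suc n) \<Longrightarrow> transpose_mat B *\<^sub>v r = 0\<^sub>v n \<Longrightarrow> \<exists>c. r = c \<cdot>\<^sub>v (M *\<^sub>v v)"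
    and z: "z \<in> carrier_vec n"
    and orth: "v \<bullet> (K *\<^sub>v (B *\<^sub>v z)) = 0" "v \<bullet> (M *\<^sub>v (B *\<^sub>v z)) = 0"
    and ev: "(transpose_mat B * K * B) *\<^sub>v z = m \<cdot>\<^sub>v ((transpose_mat B * M * B) *\<^sub>v z)"
  shows "K *\<^sub>v (B *\<^sub>v z) = m \<cdot>\<^sub>v (M *\<^sub>v (B *\<^sub>v z))"
proof -
  have Bz: "B *\<^sub>v z \<in> carrier_vec (Suc n)" using B z by simp
  define r where "r = K *\<^sub>v (B *\<^sub>v z) - m \<cdot>\<^sub>v (M *\<^sub>v (B *\<^sub>v z))"
  have r: "r \<in> carrier_vec (Suc n)" using K M Bz by (simp add: r_def)
  have "transpose_mat B *\<^sub>v r = 0\<^sub>v n"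
    using ev K M B Bz unfolding r_def congruence_mult_vec[OF B K z] congruence_mult_vec[OF B M z]
    by (simp add: mult_minus_distrib_mat_vec[of _ n "Suc n"] mult_mat_vec[of _ n "Suc n"])
  then obtain c where c: "r = c \<cdot>\<^sub>v (M *\<^sub>v v)" using ker[OF r] by blast
  have "c = v \<bullet> r" using v M by (simp add: c)
  also have "v \<bullet> r = 0"
    using orth v K M Bz by (simp add: r_def scalar_prod_minus_distrib[of _ "Suc n"])
  finally have r0: "r = 0\<^sub>v (Suc n)" using c M v by (intro eq_vecI) auto
  show ?thesis
  proof (rule eq_vecI)
    fix i assume "i < dim_vec (m \<cdot>\<^sub>v (M *\<^sub>v (B *\<^sub>v z)))"
    then show "(K *\<^sub>v (B *\<^sub>v z)) $ i = (m \<cdot>\<^sub>v (M *\<^sub>v (B *\<^sub>v z))) $ i"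
      using arg_cong[OF r0, of "\<lambda>x. x $ i"] K M Bz by (simp add: r_def)
  qed (use K M in simp)
qed

lemma gen_eigensystem_Cons:
  fixes K M B :: "real mat"
  assumes K: "K \<in> carrier_mat (Suc n) (Suc n)" "transpose_mat K = K"
    and M: "M \<in> carrier_mat (Suc n) (Suc n)" "transpose_mat M = M"
    and v: "v \<in> carrier_vec (Suc n)" "K *\<^sub>v v = l \<cdot>\<^sub>v (M *\<^sub>v v)" "v \<bullet> (M *\<^sub>v v) = 1"
    and B: "B \<in> carrier_mat (Suc n) n"
    and orth: "\<And>z. z \<in> carrier_vec n \<Longrightarrow> (M *\<^sub>v v) \<bullet> (B *\<^sub>v z) = 0"
    and ker: "\<And>r. r \<in> carrier_vec (Suc n) \<Longrightarrow> transpose_mat B *\<^sub>v r = 0\<^sub>v n \<Longrightarrow> \<exists>c. r = c \<cdot>\<^sub>v (M *\<^sub>v v)"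
    and es: "gen_eigensystem n (transpose_mat B * K * B) (transpose_mat B * M * B) ps"
  shows "gen_eigensystem (Suc n) K M ((l, v) # map (\<lambda>(m, z). (m, B *\<^sub>v z)) ps)"
proof -
  let ?z = "\<lambda>j. snd (ps ! j)"
  have len: "length ps = n" and z: "\<And>j. j < n \<Longrightarrow> ?z j \<in> carrier_vec n"
    and ev: "\<And>j. j < n \<Longrightarrow> (transpose_mat B * K * B) *\<^sub>v ?z j
      = fst (ps ! j) \<cdot>\<^sub>v ((transpose_mat B * M * B) *\<^sub>v ?z j)"
    and on: "\<And>j k. j < n \<Longrightarrow> k < n \<Longrightarrow> ?z j \<bullet> ((transpose_mat B * M * B) *\<^sub>v ?z k)
      = (if j = k then 1 else 0)"
    using es by (auto simp: gen_eigensystem_def)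
  have Bz: "B *\<^sub>v x \<in> carrier_vec (Suc n)" if "x \<in> carrier_vec n" for x
    using B that by simp
  have vMB: "v \<bullet> (M *\<^sub>v (B *\<^sub>v x)) = 0" and BMv: "(B *\<^sub>v x) \<bullet> (M *\<^sub>v v) = 0"
    if "x \<in> carrier_vec n" for x
    using orth[OF that] sym_mat_scalar_prod_comm[OF M v(1) Bz[OF that]]
      comm_scalar_prod[of "M *\<^sub>v v" "Suc n"] M v Bz[OF that] by auto
  have vKB: "v \<bullet> (K *\<^sub>v (B *\<^sub>v x)) = 0" if "x \<in> carrier_vec n" for x
    using sym_mat_scalar_prod_comm[OF K v(1) Bz[OF that]] BMv[OF that] v M Bz[OF that] by simp
  have lift: "K *\<^sub>v (B *\<^sub>v ?z j) = fst (ps ! j) \<cdot>\<^sub>v (M *\<^sub>v (B *\<^sub>v ?z j))" if "j < n" for j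
    using deflation_lift_eigenvector[OF K(1) M(1) v(1,3) B ker z vKB vMB ev] that z by blast
  let ?ps = "(l, v) # map (\<lambda>(m, z). (m, B *\<^sub>v z)) ps"
  show ?thesis
    unfolding gen_eigensystem_def
  proof (intro conjI allI impI)
    fix j assume "j < Suc n"
    then show "snd (?ps ! j) \<in> carrier_vec (Suc n)"
      and "K *\<^sub>v snd (?ps ! j) = fst (?ps ! j) \<cdot>\<^sub>v (M *\<^sub>v snd (?ps ! j))"
      using v lift z Bz len by (auto simp: nth_Cons' case_prod_beta)
  next
    fix j k assume "j < Suc n" "k < Suc n"
    then show "snd (?ps ! j) \<bullet> (M *\<^sub>v snd (?ps ! k)) = (if j = k then 1 else 0)"
      using v vMB BMv z on len congruence_scalar_prod[OF B M(1)]
      by (auto simp: nth_Cons' case_prod_beta)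
  qed (use len in simp)
qed

lemma gen_eigensystem_exists:
  fixes K M :: "real mat"
  assumes "K \<in> carrier_mat n n" "transpose_mat K = K" "spd_mat M" "M \<in> carrier_mat n n"
  shows "\<exists>ps. gen_eigensystem n K M ps"
  using assms
proof (induction n arbitrary: K M)
  case 0
  show ?case by (rule exI[of _ "[]"]) (simp add: gen_eigensystem_def)
next
  case (Suc n)
  note K = Suc.prems(1,2) and M = Suc.prems(3,4)
  obtain l v0 where v0: "v0 \<in> carrier_vec (Suc n)" "v0 \<noteq> 0\<^sub>v (Suc n)" "K *\<^sub>v v0 = l \<cdot>\<^sub>v (M *\<^sub>v v0)"
    using gen_eigenpair_exists[OF K M] by blast
  define v where "v = (1 / sqrt (v0 \<bullet> (M *\<^sub>v v0))) \<cdot>\<^sub>v v0"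
  have pos: "v0 \<bullet> (M *\<^sub>v v0) > 0" using spd_mat_pos[OF M v0(1,2)] .
  have v: "v \<in> carrier_vec (Suc n)" "K *\<^sub>v v = l \<cdot>\<^sub>v (M *\<^sub>v v)" "v \<bullet> (M *\<^sub>v v) = 1"
    using v0 K M pos by (auto simp: v_def mult_mat_vec[of _ "Suc n" "Suc n"] smult_smult_assoc
        scalar_prod_smult_distrib[of _ "Suc n"] real_sqrt_mult[symmetric] mult.commute)
  have Mv: "M *\<^sub>v v \<in> carrier_vec (Suc n)" "M *\<^sub>v v \<noteq> 0\<^sub>v (Suc n)" using v(1,3) M by auto
  obtain B where B: "B \<in> carrier_mat (Suc n) n"
    and inj: "\<forall>z \<in> carrier_vec n. B *\<^sub>v z = 0\<^sub>v (Suc n) \<longrightarrow> z = 0\<^sub>v n"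
    and orth: "\<forall>z \<in> carrier_vec n. (M *\<^sub>v v) \<bullet> (B *\<^sub>v z) = 0"
    and ker: "\<forall>r \<in> carrier_vec (Suc n). transpose_mat B *\<^sub>v r = 0\<^sub>v n \<longrightarrow> (\<exists>c. r = c \<cdot>\<^sub>v (M *\<^sub>v v))"
    using deflation_exists[OF Mv] by blast
  obtain ps where "gen_eigensystem n (transpose_mat B * K * B) (transpose_mat B * M * B) ps"
    using Suc.IH[of "transpose_mat B * K * B" "transpose_mat B * M * B"] B K M inj
      congruence_sym[OF B K(1,2)] spd_mat_congruence[OF M B] by auto
  then show ?case
    using gen_eigensystem_Cons[OF K M(2) spd_mat_sym[OF M(1)] v B] orth ker by blast
qed

lemma gen_eigensystem_distinct:
  assumes "gen_eigensystem n K M ps"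
  shows "distinct ps"
  unfolding distinct_conv_nth
proof (intro allI impI)
  fix i j assume "i < length ps" "j < length ps" "i \<noteq> j"
  then show "ps ! i \<noteq> ps ! j"
    using assms unfolding gen_eigensystem_def by (metis zero_neq_one)
qed

lemma gen_eigensystem_perm:
  assumes es: "gen_eigensystem n K M ps" and perm: "mset ps' = mset ps"
  shows "gen_eigensystem n K M ps'"
proof -
  have len: "length ps = n" and "length ps' = n"
    using es mset_eq_length[OF perm] by (auto simp: gen_eigensystem_def)
  have dist: "distinct ps" "distinct ps'"
    using gen_eigensystem_distinct[OF es] perm by (auto dest: mset_eq_imp_distinct_iff)
  have "\<exists>a<n. ps' ! j = ps ! a" if "j < n" for j
    using nth_mem[of j ps'] that \<open>length ps' = n\<close> len mset_eq_setD[OF perm]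
    by (metis in_set_conv_nth)
  then obtain \<sigma> where \<sigma>: "\<And>j. j < n \<Longrightarrow> \<sigma> j < n \<and> ps' ! j = ps ! \<sigma> j" by metis
  have "\<sigma> j = \<sigma> k \<longleftrightarrow> j = k" if "j < n" "k < n" for j k
    using \<sigma>[OF that(1)] \<sigma>[OF that(2)] dist that len \<open>length ps' = n\<close> by (metis nth_eq_iff_index_eq)
  then show ?thesis
    using es \<sigma> \<open>length ps' = n\<close> unfolding gen_eigensystem_def by auto
qed

section \<open>Generalized eigenvalues as roots of the pencil determinant\<close>

lemma congruence_mat_of_cols_index:
  fixes S :: "real mat"
  assumes S: "S \<in> carrier_mat n n" and ws: "set ws \<subseteq> carrier_vec n" "length ws = n"
    and j: "j < n" and k: "k < n"
  shows "(transpose_mat (mat_of_cols n ws) * S * mat_of_cols n ws) $$ (j, k) = ws ! j \<bullet> (S *\<^sub>v ws ! k)"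
proof -
  have V: "mat_of_cols n ws \<in> carrier_mat n n" using mat_of_cols_carrier(1)[of n ws] ws(2) by simp
  have "ws ! j \<in> carrier_vec n" "ws ! k \<in> carrier_vec n" using ws j k by auto
  then show ?thesis
    using S V j k ws by (simp add: assoc_mult_mat[OF _ S V, of _ n] mult_mat_vec_def)
qed

lemma det_congruence:
  fixes V S :: "real mat"
  assumes "V \<in> carrier_mat n n" "S \<in> carrier_mat n n"
  shows "det (transpose_mat V * S * V) = det V ^ 2 * det S"
  using assms by (simp add: det_mult[of _ n] det_transpose power2_eq_square)

lemma det_mat_diag: "det (mat_diag n f) = prod_list (map f [0..<n])"
  by (subst det_upper_triangular[of _ n])
    (auto simp: mat_diag_def upper_triangular_def diag_mat_def intro!: arg_cong[of _ _ prod_list])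

lemma gen_eigensystem_congruence:
  fixes K M :: "real mat"
  assumes K: "K \<in> carrier_mat n n" and M: "M \<in> carrier_mat n n" and es: "gen_eigensystem n K M ps"
  defines "V \<equiv> mat_of_cols n (map snd ps)"
  shows "transpose_mat V * M * V = 1\<^sub>m n"
    and "transpose_mat V * (x \<cdot>\<^sub>m M - K) * V = mat_diag n (\<lambda>j. x - fst (ps ! j))"
proof -
  have len: "length (map snd ps) = n" using es by (simp add: gen_eigensystem_def)
  have ws: "set (map snd ps) \<subseteq> carrier_vec n"
  proof
    fix w assume "w \<in> set (map snd ps)"
    then obtain j where "j < length ps" "w = snd (ps ! j)" by (auto simp: in_set_conv_nth)
    then show "w \<in> carrier_vec n" using es by (simp add: gen_eigensystem_def)
  qed
  have V: "V \<in> carrier_mat n n" using mat_of_cols_carrier(1)[of n "map snd ps"] len by (simp add: V_def)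
  note entry = congruence_mat_of_cols_index[OF _ ws len, folded V_def]
  show "transpose_mat V * M * V = 1\<^sub>m n"
  proof (rule eq_matI)
    fix j k assume "j < dim_row (1\<^sub>m n :: real mat)" "k < dim_col (1\<^sub>m n :: real mat)"
    then have jk: "j < n" "k < n" by auto
    then show "(transpose_mat V * M * V) $$ (j, k) = 1\<^sub>m n $$ (j, k)"
      using es len unfolding entry[OF M jk] by (auto simp: gen_eigensystem_def)
  qed (use V in auto)
  have diag_entry: "snd (ps ! j) \<bullet> ((x \<cdot>\<^sub>m M - K) *\<^sub>v snd (ps ! k)) = (if j = k then x - fst (ps ! j) else 0)"
    if "j < n" "k < n" for j k
    using es that K M
    by (auto simp: gen_eigensystem_def minus_mult_distrib_mat_vec[of _ n n]
        scalar_prod_minus_distrib[of _ n] smult_mat_mult_vec[of _ n n])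
  then show "transpose_mat V * (x \<cdot>\<^sub>m M - K) * V = mat_diag n (\<lambda>j. x - fst (ps ! j))"
  proof (intro eq_matI)
    fix j k
    assume "j < dim_row (mat_diag n (\<lambda>j. x - fst (ps ! j)))" "k < dim_col (mat_diag n (\<lambda>j. x - fst (ps ! j)))"
    then have jk: "j < n" "k < n" by (auto simp: mat_diag_def)
    have S: "x \<cdot>\<^sub>m M - K \<in> carrier_mat n n" using minus_carrier_mat[OF K] by blast
    show "(transpose_mat V * (x \<cdot>\<^sub>m M - K) * V) $$ (j, k) = mat_diag n (\<lambda>j. x - fst (ps ! j)) $$ (j, k)"
      using jk len diag_entry[OF jk] unfolding entry[OF S jk] by (auto simp: mat_diag_def)
  qed (use V in \<open>auto simp: mat_diag_def\<close>)
qed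

lemma gen_eigensystem_det:
  fixes K M :: "real mat"
  assumes K: "K \<in> carrier_mat n n" and M: "M \<in> carrier_mat n n" and es: "gen_eigensystem n K M ps"
  shows "det (x \<cdot>\<^sub>m M - K) = det M * prod_list (map (\<lambda>l. x - l) (map fst ps))"
proof -
  define V where "V = mat_of_cols n (map snd ps)"
  have len: "length ps = n" using es by (simp add: gen_eigensystem_def)
  have V: "V \<in> carrier_mat n n" using mat_of_cols_carrier(1)[of n "map snd ps"] len by (simp add: V_def)
  have diag: "map (\<lambda>j. x - fst (ps ! j)) [0..<n] = map (\<lambda>l. x - l) (map fst ps)"
    using len by (simp add: list_eq_iff_nth_eq)
  have detM: "det V ^ 2 * det M = 1"
    using det_congruence[OF V M] gen_eigensystem_congruence(1)[OF K M es] by (simp add: V_def)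
  have "det V ^ 2 * det (x \<cdot>\<^sub>m M - K) = det (transpose_mat V * (x \<cdot>\<^sub>m M - K) * V)"
    using det_congruence[OF V minus_carrier_mat[OF K]] by simp
  also have "\<dots> = det (mat_diag n (\<lambda>j. x - fst (ps ! j)))"
    using gen_eigensystem_congruence(2)[OF K M es] by (simp add: V_def)
  also have "\<dots> = prod_list (map (\<lambda>l. x - l) (map fst ps))"
    unfolding det_mat_diag diag ..
  finally show ?thesis using detM by (metis mult.assoc mult.commute mult_1)
qed

lemma order_prod_linear_factors:
  "order a (\<Prod>l\<leftarrow>ls. [:-l, 1:]) = count (mset ls) (a :: real)"
proof (induction ls)
  case (Cons l ls)
  let ?P = "\<Prod>l\<leftarrow>ls. [:-l, 1:]"
  have "?P \<noteq> 0" by (auto simp: prod_list_zero_iff)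
  then have "order a ([:-l, 1:] * ?P) = order a [:-l, 1:] + order a ?P"
    by (intro order_mult) (simp only: mult_eq_0_iff pCons_eq_0_iff one_neq_zero, simp)
  moreover have "order a [:-l, 1:] = (if l = a then 1 else 0)"
    using order_power_n_n[of a 1] by (auto intro: order_0I)
  ultimately show ?case using Cons by (simp only: list.map prod_list.Cons) simp
qed simp

lemma mset_eq_if_prod_linear_factors_eq:
  fixes ls ls' :: "real list"
  assumes "\<And>x. prod_list (map (\<lambda>l. x - l) ls) = prod_list (map (\<lambda>l. x - l) ls')"
  shows "mset ls = mset ls'"
proof -
  have "poly (\<Prod>l\<leftarrow>ls. [:-l, 1:]) = poly (\<Prod>l\<leftarrow>ls'. [:-l, 1:])"
    using assms by (simp add: poly_prod_list o_def fun_eq_iff)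
  then show ?thesis
    by (intro multiset_eqI) (metis order_prod_linear_factors poly_eq_poly_eq_iff)
qed

lemma gen_eigs_eq:
  fixes K M :: "real mat"
  assumes K: "K \<in> carrier_mat n n" and M: "M \<in> carrier_mat n n" "det M \<noteq> 0"
    and es: "gen_eigensystem n K M ps" and sorted: "sorted (map fst ps)"
  shows "gen_eigs K M = map fst ps"
  unfolding gen_eigs_def
proof (rule the_equality)
  show "length (map fst ps) = dim_row K \<and> sorted (map fst ps) \<and>
      (\<forall>x. det (x \<cdot>\<^sub>m M - K) = det M * prod_list (map ((-) x) (map fst ps)))"
    using es sorted K gen_eigensystem_det[OF K M(1) es] by (auto simp: gen_eigensystem_def)
next
  fix ls assume ls: "length ls = dim_row K \<and> sorted ls \<and>
      (\<forall>x. det (x \<cdot>\<^sub>m M - K) = det M * prod_list (map ((-) x) ls))"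
  then have "mset ls = mset (map fst ps)"
    using gen_eigensystem_det[OF K M(1) es] M(2) by (intro mset_eq_if_prod_linear_factors_eq) auto
  then show "ls = map fst ps"
    using ls sorted properties_for_sort sorted_sort_id by metis
qed

lemma gen_eigs_eigensystem:
  fixes K M :: "real mat"
  assumes K: "K \<in> carrier_mat n n" "transpose_mat K = K" and M: "spd_mat M" "M \<in> carrier_mat n n"
  obtains ps where "gen_eigensystem n K M ps" "sorted (map fst ps)" "gen_eigs K M = map fst ps"
proof -
  obtain ps0 where "gen_eigensystem n K M ps0" using gen_eigensystem_exists[OF K M] by blast
  then have es: "gen_eigensystem n K M (sort_key fst ps0)" by (rule gen_eigensystem_perm) simp
  show thesis
    using that[OF es _ gen_eigs_eq[OF K(1) M(2) spd_mat_det_nonzero[OF M] es]]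
    by (simp add: sorted_sort_key)
qed

lemma length_gen_eigs:
  fixes K M :: "real mat"
  assumes "K \<in> carrier_mat n n" "transpose_mat K = K" "spd_mat M" "M \<in> carrier_mat n n"
  shows "length (gen_eigs K M) = n"
  using gen_eigs_eigensystem[OF assms] by (metis gen_eigensystem_def length_map)

lemma gen_eigs_pos:
  fixes K M :: "real mat"
  assumes K: "spd_mat K" "K \<in> carrier_mat n n" and M: "spd_mat M" "M \<in> carrier_mat n n"
    and i: "i < n"
  shows "gen_eigs K M ! i > 0"
proof -
  obtain ps where es: "gen_eigensystem n K M ps" and eigs: "gen_eigs K M = map fst ps"
    using gen_eigs_eigensystem[OF K(2) spd_mat_sym[OF K(1)] M] by blast
  let ?v = "snd (ps ! i)"
  have v: "?v \<in> carrier_vec n" "K *\<^sub>v ?v = fst (ps ! i) \<cdot>\<^sub>v (M *\<^sub>v ?v)" "?v \<bullet> (M *\<^sub>v ?v) = 1"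
    and len: "length ps = n"
    using es i by (auto simp: gen_eigensystem_def)
  then have "?v \<noteq> 0\<^sub>v n" using M by auto
  then have "?v \<bullet> (K *\<^sub>v ?v) > 0" using spd_mat_pos[OF K v(1)] by blast
  then show ?thesis using v M i len eigs by simp
qed

section \<open>Min-max comparison of generalized eigenvalues\<close>

lemma nontrivial_linear_dependence:
  fixes f :: "nat \<Rightarrow> real vec"
  assumes f: "\<And>k. k < Suc n \<Longrightarrow> f k \<in> carrier_vec n"
  obtains c where "\<exists>k<Suc n. c k \<noteq> 0" and "\<And>r. r < n \<Longrightarrow> (\<Sum>k<Suc n. c k * f k $ r) = 0"
proof -
  \<comment> \<open>rows: the coordinate sequences of the f k, completed by a zero row to make A singular\<close>
  define A where "A = mat\<^sub>r (Suc n) (Suc n) (\<lambda>r. if r = n then 0\<^sub>v (Suc n) else vec (Suc n) (\<lambda>k. f k $ r))"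
  have A: "A \<in> carrier_mat (Suc n) (Suc n)" unfolding A_def by simp
  have "det A = 0" unfolding A_def by (rule det_row_0) auto
  then obtain v where v: "v \<in> carrier_vec (Suc n)" "v \<noteq> 0\<^sub>v (Suc n)" "A *\<^sub>v v = 0\<^sub>v (Suc n)"
    using det_0_iff_vec_prod_zero[OF A] by blast
  have "\<exists>k<Suc n. v $ k \<noteq> 0"
    using v(1,2) by (metis carrier_vecD eq_vecI index_zero_vec)
  moreover have "(\<Sum>k<Suc n. v $ k * f k $ r) = 0" if r: "r < n" for r
    using arg_cong[OF v(3), of "\<lambda>x. x $ r"] A r v(1)
    by (simp add: A_def scalar_prod_def atLeast0LessThan mult.commute)
  ultimately show thesis using that by blast
qed

lemma mult_mat_vec_sum:
  fixes A :: "real mat"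
  assumes A: "A \<in> carrier_mat n n" and w: "\<And>j. j \<in> J \<Longrightarrow> w j \<in> carrier_vec n"
  shows "A *\<^sub>v vec n (\<lambda>r. \<Sum>j\<in>J. a j * w j $ r) = vec n (\<lambda>r. \<Sum>j\<in>J. a j * (A *\<^sub>v w j) $ r)"
proof (rule eq_vecI)
  fix r assume "r < dim_vec (vec n (\<lambda>r. \<Sum>j\<in>J. a j * (A *\<^sub>v w j) $ r))"
  then have r: "r < n" by simp
  have "(A *\<^sub>v vec n (\<lambda>r. \<Sum>j\<in>J. a j * w j $ r)) $ r = (\<Sum>s<n. A $$ (r, s) * (\<Sum>j\<in>J. a j * w j $ s))"
    using A r by (simp add: scalar_prod_def atLeast0LessThan)
  also have "\<dots> = (\<Sum>j\<in>J. \<Sum>s<n. a j * (A $$ (r, s) * w j $ s))"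
    by (subst sum.swap) (simp add: sum_distrib_left mult.left_commute)
  also have "\<dots> = (\<Sum>j\<in>J. a j * (A *\<^sub>v w j) $ r)"
  proof (rule sum.cong)
    fix j assume "j \<in> J"
    then show "(\<Sum>s<n. a j * (A $$ (r, s) * w j $ s)) = a j * (A *\<^sub>v w j) $ r"
      using A r w[OF \<open>j \<in> J\<close>] by (simp add: scalar_prod_def atLeast0LessThan sum_distrib_left)
  qed simp
  finally show "(A *\<^sub>v vec n (\<lambda>r. \<Sum>j\<in>J. a j * w j $ r)) $ r = vec n (\<lambda>r. \<Sum>j\<in>J. a j * (A *\<^sub>v w j) $ r) $ r"
    using r by simp
qed (use A in simp)

lemma sum_vec_scalar_prod:
  fixes y :: "real vec"
  assumes y: "y \<in> carrier_vec n" and w: "\<And>j. j \<in> J \<Longrightarrow> w j \<in> carrier_vec n"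
  shows "vec n (\<lambda>r. \<Sum>j\<in>J. a j * w j $ r) \<bullet> y = (\<Sum>j\<in>J. a j * (w j \<bullet> y))"
proof -
  have "vec n (\<lambda>r. \<Sum>j\<in>J. a j * w j $ r) \<bullet> y = (\<Sum>j\<in>J. \<Sum>r<n. a j * (w j $ r * y $ r))"
    using y by (subst sum.swap) (simp add: scalar_prod_def atLeast0LessThan sum_distrib_right mult.assoc)
  then show ?thesis
    using y w by (simp add: scalar_prod_def atLeast0LessThan sum_distrib_left)
qed

definition eigen_comb :: "nat \<Rightarrow> (real \<times> real vec) list \<Rightarrow> (nat \<Rightarrow> real) \<Rightarrow> nat set \<Rightarrow> real vec" where
  "eigen_comb n ps a J = vec n (\<lambda>r. \<Sum>j\<in>J. a j * snd (ps ! j) $ r)"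

lemma eigen_comb_carrier: "eigen_comb n ps a J \<in> carrier_vec n"
  by (simp add: eigen_comb_def)

lemma eigen_comb_quad_forms:
  fixes K M :: "real mat" and a :: "nat \<Rightarrow> real"
  assumes K: "K \<in> carrier_mat n n" and M: "M \<in> carrier_mat n n"
    and es: "gen_eigensystem n K M ps" and J: "J \<subseteq> {..<n}"
  defines "x \<equiv> eigen_comb n ps a J"
  shows "x \<bullet> (M *\<^sub>v x) = (\<Sum>j\<in>J. a j ^ 2)"
    and "x \<bullet> (K *\<^sub>v x) = (\<Sum>j\<in>J. a j ^ 2 * fst (ps ! j))"
proof -
  let ?w = "\<lambda>j. snd (ps ! j)"
  have finJ: "finite J" using J finite_subset by blast
  have w: "?w j \<in> carrier_vec n" "M *\<^sub>v ?w j \<in> carrier_vec n"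
    and Kw: "K *\<^sub>v ?w j = fst (ps ! j) \<cdot>\<^sub>v (M *\<^sub>v ?w j)" if "j \<in> J" for j
    using es J M that by (auto simp: gen_eigensystem_def)
  have on: "?w k \<bullet> (M *\<^sub>v ?w j) = (if k = j then 1 else 0)" if "j \<in> J" "k \<in> J" for j k
    using es that J unfolding gen_eigensystem_def by blast
  have x: "x \<in> carrier_vec n" by (simp add: x_def eigen_comb_carrier)
  have xMw: "x \<bullet> (M *\<^sub>v ?w j) = a j" if j: "j \<in> J" for j
  proof -
    have "x \<bullet> (M *\<^sub>v ?w j) = (\<Sum>k\<in>J. a k * (?w k \<bullet> (M *\<^sub>v ?w j)))"
      unfolding x_def eigen_comb_def using w j by (intro sum_vec_scalar_prod) auto
    also have "\<dots> = (\<Sum>k\<in>J. if k = j then a k else 0)"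
      using on j by (intro sum.cong) auto
    finally show ?thesis using j finJ by simp
  qed
  have x_sum: "x \<bullet> vec n (\<lambda>r. \<Sum>j\<in>J. b j * (M *\<^sub>v ?w j) $ r) = (\<Sum>j\<in>J. b j * a j)" for b
  proof -
    have "x \<bullet> vec n (\<lambda>r. \<Sum>j\<in>J. b j * (M *\<^sub>v ?w j) $ r) = (\<Sum>j\<in>J. b j * ((M *\<^sub>v ?w j) \<bullet> x))"
      using x w by (subst comm_scalar_prod[OF x]) (auto intro: sum_vec_scalar_prod)
    then show ?thesis
      using xMw w x by (simp add: comm_scalar_prod[of "M *\<^sub>v _" n x])
  qed
  have Mx: "M *\<^sub>v x = vec n (\<lambda>r. \<Sum>j\<in>J. a j * (M *\<^sub>v ?w j) $ r)"
    unfolding x_def eigen_comb_def using M w by (intro mult_mat_vec_sum) auto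
  have "K *\<^sub>v x = vec n (\<lambda>r. \<Sum>j\<in>J. a j * (K *\<^sub>v ?w j) $ r)"
    unfolding x_def eigen_comb_def using K w by (intro mult_mat_vec_sum) auto
  also have "\<dots> = vec n (\<lambda>r. \<Sum>j\<in>J. (a j * fst (ps ! j)) * (M *\<^sub>v ?w j) $ r)"
    using Kw M by (intro eq_vecI sum.cong) (auto simp: mult.assoc)
  finally have Kx: "K *\<^sub>v x = vec n (\<lambda>r. \<Sum>j\<in>J. (a j * fst (ps ! j)) * (M *\<^sub>v ?w j) $ r)" .
  show "x \<bullet> (M *\<^sub>v x) = (\<Sum>j\<in>J. a j ^ 2)"
    unfolding Mx x_sum by (simp add: power2_eq_square)
  show "x \<bullet> (K *\<^sub>v x) = (\<Sum>j\<in>J. a j ^ 2 * fst (ps ! j))"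
    unfolding Kx x_sum by (simp add: power2_eq_square mult_ac)
qed

lemma eigen_comb_rayleigh_upper:
  fixes K M :: "real mat" and a :: "nat \<Rightarrow> real"
  assumes K: "K \<in> carrier_mat n n" and M: "M \<in> carrier_mat n n"
    and es: "gen_eigensystem n K M ps" and J: "J \<subseteq> {..<n}" and t: "\<And>j. j \<in> J \<Longrightarrow> fst (ps ! j) \<le> t"
  defines "x \<equiv> eigen_comb n ps a J"
  shows "x \<bullet> (K *\<^sub>v x) \<le> t * (x \<bullet> (M *\<^sub>v x))"
proof -
  have "(\<Sum>j\<in>J. a j ^ 2 * fst (ps ! j)) \<le> (\<Sum>j\<in>J. a j ^ 2 * t)"
    using t by (intro sum_mono mult_left_mono) auto
  then show ?thesis
    using eigen_comb_quad_forms[OF K M es J]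
    by (simp add: x_def sum_distrib_right[symmetric] mult.commute[of t])
qed

lemma eigen_comb_rayleigh_lower:
  fixes K M :: "real mat" and a :: "nat \<Rightarrow> real"
  assumes K: "K \<in> carrier_mat n n" and M: "M \<in> carrier_mat n n"
    and es: "gen_eigensystem n K M ps" and J: "J \<subseteq> {..<n}" and t: "\<And>j. j \<in> J \<Longrightarrow> t \<le> fst (ps ! j)"
  defines "x \<equiv> eigen_comb n ps a J"
  shows "t * (x \<bullet> (M *\<^sub>v x)) \<le> x \<bullet> (K *\<^sub>v x)"
proof -
  have "(\<Sum>j\<in>J. a j ^ 2 * t) \<le> (\<Sum>j\<in>J. a j ^ 2 * fst (ps ! j))"
    using t by (intro sum_mono mult_left_mono) auto
  then show ?thesis
    using eigen_comb_quad_forms[OF K M es J]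
    by (simp add: x_def sum_distrib_right[symmetric] mult.commute[of t])
qed

lemma sum_lessThan_Suc_split:
  assumes "i < n"
  shows "(\<Sum>k<Suc n. g k) = (\<Sum>k\<in>{..i}. g k) + (\<Sum>j\<in>{i..<n}. g (Suc j))"
proof -
  have split: "{..<Suc n} = {..i} \<union> {Suc i..<Suc n}" using assms by auto
  have "(\<Sum>k<Suc n. g k) = (\<Sum>k\<in>{..i}. g k) + (\<Sum>k\<in>{Suc i..<Suc n}. g k)"
    unfolding split by (rule sum.union_disjoint) auto
  also have "(\<Sum>k\<in>{Suc i..<Suc n}. g k) = (\<Sum>j\<in>{i..<n}. g (Suc j))"
    by (rule sum.shift_bounds_Suc_ivl)
  finally show ?thesis .
qed

lemma eigen_combs_intersect:
  fixes K1 M1 K2 M2 :: "real mat"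
  assumes K1: "K1 \<in> carrier_mat n n" and M1: "M1 \<in> carrier_mat n n"
    and K2: "K2 \<in> carrier_mat n n" and M2: "M2 \<in> carrier_mat n n"
    and es1: "gen_eigensystem n K1 M1 ps1" and es2: "gen_eigensystem n K2 M2 ps2" and i: "i < n"
  obtains a b where "eigen_comb n ps2 a {..i} = eigen_comb n ps1 b {i..<n}"
    and "eigen_comb n ps2 a {..i} \<noteq> 0\<^sub>v n"
proof -
  define f where "f k = (if k \<le> i then snd (ps2 ! k) else snd (ps1 ! (k - 1)))" for k
  have "f k \<in> carrier_vec n" if "k < Suc n" for k
    using es1 es2 i that by (auto simp: f_def gen_eigensystem_def)
  then obtain c where c: "\<exists>k<Suc n. c k \<noteq> 0" and dep: "\<And>r. r < n \<Longrightarrow> (\<Sum>k<Suc n. c k * f k $ r) = 0"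
    using nontrivial_linear_dependence by blast
  define b where "b j = - c (Suc j)" for j
  have "(\<Sum>k<Suc n. c k * f k $ r)
      = (\<Sum>k\<in>{..i}. c k * snd (ps2 ! k) $ r) - (\<Sum>j\<in>{i..<n}. b j * snd (ps1 ! j) $ r)" for r
    unfolding sum_lessThan_Suc_split[OF i] by (simp add: f_def b_def sum_negf)
  then have eq: "eigen_comb n ps2 c {..i} = eigen_comb n ps1 b {i..<n}"
    using dep by (intro eq_vecI) (auto simp: eigen_comb_def)
  moreover have "eigen_comb n ps2 c {..i} \<noteq> 0\<^sub>v n"
  proof
    assume x0: "eigen_comb n ps2 c {..i} = 0\<^sub>v n"
    have "(\<Sum>j\<in>{..i}. c j ^ 2) = 0" "(\<Sum>j\<in>{i..<n}. b j ^ 2) = 0"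
      using eigen_comb_quad_forms(1)[OF K2 M2 es2 _, of "{..i}" c]
        eigen_comb_quad_forms(1)[OF K1 M1 es1, of "{i..<n}" b] x0 eq i M1 M2 by (auto simp: subset_iff)
    then have zero: "\<forall>j\<in>{..i}. c j = 0" "\<forall>j\<in>{i..<n}. c (Suc j) = 0"
      by (auto simp: sum_nonneg_eq_0_iff b_def)
    have "c k = 0" if "k < Suc n" for k
    proof (cases "k \<le> i")
      case False
      then have "k - 1 \<in> {i..<n}" "Suc (k - 1) = k" using that by auto
      then show ?thesis using zero(2) by metis
    qed (use zero(1) in auto)
    with c show False by blast
  qed
  ultimately show thesis using that by blast
qed

lemma gen_eigensystem_compare:
  fixes K1 M1 K2 M2 :: "real mat"
  assumes K1: "K1 \<in> carrier_mat n n" and M1: "spd_mat M1" "M1 \<in> carrier_mat n n"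
    and K2: "K2 \<in> carrier_mat n n" and M2: "spd_mat M2" "M2 \<in> carrier_mat n n"
    and es1: "gen_eigensystem n K1 M1 ps1" "sorted (map fst ps1)"
    and es2: "gen_eigensystem n K2 M2 ps2" "sorted (map fst ps2)"
    and c: "c \<ge> 0"
    and rayleigh: "\<And>x. x \<in> carrier_vec n \<Longrightarrow> x \<noteq> 0\<^sub>v n \<Longrightarrow>
       (x \<bullet> (K1 *\<^sub>v x)) * (x \<bullet> (M2 *\<^sub>v x)) \<le> c * (x \<bullet> (K2 *\<^sub>v x)) * (x \<bullet> (M1 *\<^sub>v x))"
    and i: "i < n"
  shows "fst (ps1 ! i) \<le> c * fst (ps2 ! i)"
proof -
  obtain a b where xy: "eigen_comb n ps2 a {..i} = eigen_comb n ps1 b {i..<n}"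
    and x0: "eigen_comb n ps2 a {..i} \<noteq> 0\<^sub>v n"
    using eigen_combs_intersect[OF K1 M1(2) K2 M2(2) es1(1) es2(1) i] by blast
  define x where "x = eigen_comb n ps2 a {..i}"
  have x: "x \<in> carrier_vec n" by (simp add: x_def eigen_comb_carrier)
  have len: "length ps1 = n" "length ps2 = n" using es1 es2 by (auto simp: gen_eigensystem_def)
  \<comment> \<open>x is a combination of the first i+1 eigenvectors of the second pencil and
    of the last n-i eigenvectors of the first\<close>
  have upper: "x \<bullet> (K2 *\<^sub>v x) \<le> fst (ps2 ! i) * (x \<bullet> (M2 *\<^sub>v x))"
    unfolding x_def using i len es2(2)
    by (intro eigen_comb_rayleigh_upper[OF K2 M2(2) es2(1)]) (auto simp: sorted_iff_nth_mono)
  have lower: "fst (ps1 ! i) * (x \<bullet> (M1 *\<^sub>v x)) \<le> x \<bullet> (K1 *\<^sub>v x)"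
    unfolding x_def xy using i len es1(2)
    by (intro eigen_comb_rayleigh_lower[OF K1 M1(2) es1(1)]) (auto simp: sorted_iff_nth_mono)
  have pos: "x \<bullet> (M1 *\<^sub>v x) > 0" "x \<bullet> (M2 *\<^sub>v x) > 0"
    using spd_mat_pos[OF M1 x] spd_mat_pos[OF M2 x] x0 by (auto simp: x_def)
  have "fst (ps1 ! i) * (x \<bullet> (M1 *\<^sub>v x)) * (x \<bullet> (M2 *\<^sub>v x)) \<le> (x \<bullet> (K1 *\<^sub>v x)) * (x \<bullet> (M2 *\<^sub>v x))"
    using lower pos by (simp add: mult_right_mono)
  also have "\<dots> \<le> c * (x \<bullet> (K2 *\<^sub>v x)) * (x \<bullet> (M1 *\<^sub>v x))"
    using rayleigh[OF x] x0 by (simp add: x_def)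
  also have "\<dots> \<le> c * (fst (ps2 ! i) * (x \<bullet> (M2 *\<^sub>v x))) * (x \<bullet> (M1 *\<^sub>v x))"
    using upper pos c by (simp add: mult_left_mono mult_right_mono)
  finally show ?thesis using pos by (simp add: mult_ac)
qed

lemma gen_eigs_mono:
  fixes K1 M1 K2 M2 :: "real mat"
  assumes K1: "K1 \<in> carrier_mat n n" "transpose_mat K1 = K1" and M1: "spd_mat M1" "M1 \<in> carrier_mat n n"
    and K2: "K2 \<in> carrier_mat n n" "transpose_mat K2 = K2" and M2: "spd_mat M2" "M2 \<in> carrier_mat n n"
    and c: "c \<ge> 0"
    and rayleigh: "\<And>x. x \<in> carrier_vec n \<Longrightarrow> x \<noteq> 0\<^sub>v n \<Longrightarrow>
       (x \<bullet> (K1 *\<^sub>v x)) * (x \<bullet> (M2 *\<^sub>v x)) \<le> c * (x \<bullet> (K2 *\<^sub>v x)) * (x \<bullet> (M1 *\<^sub>v x))"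
    and i: "i < n"
  shows "gen_eigs K1 M1 ! i \<le> c * gen_eigs K2 M2 ! i"
proof -
  obtain ps1 where es1: "gen_eigensystem n K1 M1 ps1" "sorted (map fst ps1)" "gen_eigs K1 M1 = map fst ps1"
    using gen_eigs_eigensystem[OF K1 M1] by blast
  obtain ps2 where es2: "gen_eigensystem n K2 M2 ps2" "sorted (map fst ps2)" "gen_eigs K2 M2 = map fst ps2"
    using gen_eigs_eigensystem[OF K2 M2] by blast
  show ?thesis
    using gen_eigensystem_compare[OF K1(1) M1 K2(1) M2 es1(1,2) es2(1,2) c rayleigh i] es1 es2 i
    by (simp add: gen_eigensystem_def)
qed

lemma eigs_mono:
  fixes A B :: "real mat"
  assumes A: "spd_mat A" "A \<in> carrier_mat n n" and B: "spd_mat B" "B \<in> carrier_mat n n"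
    and c: "c \<ge> 0" and le: "\<And>x. x \<in> carrier_vec n \<Longrightarrow> x \<bullet> (A *\<^sub>v x) \<le> c * (x \<bullet> (B *\<^sub>v x))"
    and i: "i < n"
  shows "eigs A ! i \<le> c * eigs B ! i"
proof -
  have "(x \<bullet> (A *\<^sub>v x)) * (x \<bullet> (1\<^sub>m n *\<^sub>v x)) \<le> c * (x \<bullet> (B *\<^sub>v x)) * (x \<bullet> (1\<^sub>m n *\<^sub>v x))"
    if "x \<in> carrier_vec n" for x
    using le[OF that] that scalar_prod_self_nonneg[of x] by (simp add: mult_right_mono)
  then show ?thesis
    using gen_eigs_mono[OF A(2) spd_mat_sym[OF A(1)] spd_mat_one one_carrier_mat
        B(2) spd_mat_sym[OF B(1)] spd_mat_one one_carrier_mat c _ i] A(2) B(2)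
    by (simp add: eigs_def)
qed

lemma gen_eigs_mass_mono:
  fixes K M1 M2 :: "real mat"
  assumes K: "psd_mat K" "K \<in> carrier_mat n n"
    and M1: "spd_mat M1" "M1 \<in> carrier_mat n n" and M2: "spd_mat M2" "M2 \<in> carrier_mat n n"
    and c: "c \<ge> 0" and le: "\<And>x. x \<in> carrier_vec n \<Longrightarrow> x \<bullet> (M2 *\<^sub>v x) \<le> c * (x \<bullet> (M1 *\<^sub>v x))"
    and i: "i < n"
  shows "gen_eigs K M1 ! i \<le> c * gen_eigs K M2 ! i"
proof -
  have sym: "transpose_mat K = K" using K(1) by (simp add: psd_mat_def)
  have nonneg: "x \<bullet> (K *\<^sub>v x) \<ge> 0" if "x \<in> carrier_vec n" for x
    using K that by (simp add: psd_mat_def carrier_matD)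
  have "(x \<bullet> (K *\<^sub>v x)) * (x \<bullet> (M2 *\<^sub>v x)) \<le> c * (x \<bullet> (K *\<^sub>v x)) * (x \<bullet> (M1 *\<^sub>v x))"
    if "x \<in> carrier_vec n" for x
    using mult_left_mono[OF le[OF that] nonneg[OF that]] by (simp add: mult_ac)
  then show ?thesis using gen_eigs_mono[OF K(2) sym M1 K(2) sym M2 c _ i] by blast
qed

lemma cond_num_ratio_le:
  fixes M Mbar :: "real mat"
  assumes M: "spd_mat M" "M \<in> carrier_mat n n" and Mbar: "spd_mat Mbar" "Mbar \<in> carrier_mat n n"
    and n: "n > 0" and c: "c \<ge> 0"
    and lower: "\<And>x. x \<in> carrier_vec n \<Longrightarrow> x \<bullet> (M *\<^sub>v x) \<le> x \<bullet> (Mbar *\<^sub>v x)"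
    and upper: "\<And>x. x \<in> carrier_vec n \<Longrightarrow> x \<bullet> (Mbar *\<^sub>v x) \<le> c * (x \<bullet> (M *\<^sub>v x))"
  shows "cond_num Mbar / cond_num M \<le> c"
proof -
  have len: "length (eigs M) = n" "length (eigs Mbar) = n"
    using length_gen_eigs[OF _ _ spd_mat_one one_carrier_mat] M Mbar by (auto simp: eigs_def spd_mat_sym)
  have pos: "eigs A ! i > 0" if "spd_mat A" "A \<in> carrier_mat n n" "i < n" for A i
    using gen_eigs_pos[OF that(1,2) spd_mat_one one_carrier_mat that(3)] that(2) by (simp add: eigs_def)
  have cond: "cond_num A = eigs A ! (n - 1) / eigs A ! 0" if "length (eigs A) = n" for A
    using that n last_conv_nth[of "eigs A"] hd_conv_nth[of "eigs A"] by (auto simp: cond_num_def)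
  define min_M max_M min_Mbar max_Mbar where "min_M = eigs M ! 0" and "max_M = eigs M ! (n - 1)"
    and "min_Mbar = eigs Mbar ! 0" and "max_Mbar = eigs Mbar ! (n - 1)"
  have "min_M > 0" "max_M > 0" "min_Mbar > 0" "max_Mbar > 0"
    using pos[OF M] pos[OF Mbar] n by (auto simp: min_M_def max_M_def min_Mbar_def max_Mbar_def)
  moreover have "min_M \<le> min_Mbar"
    using eigs_mono[OF M Mbar _ _ n, of 1] lower by (simp add: min_M_def min_Mbar_def)
  moreover have "max_Mbar \<le> c * max_M"
    using eigs_mono[OF Mbar M c upper] n by (simp add: max_Mbar_def max_M_def)
  ultimately have "max_Mbar * min_M \<le> c * (max_M * min_Mbar)"
    using c by (metis mult.assoc mult_mono less_imp_le mult_nonneg_nonneg)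
  moreover have "cond_num Mbar / cond_num M = (max_Mbar * min_M) / (max_M * min_Mbar)"
    using cond[OF len(1)] cond[OF len(2)] by (simp add: min_M_def max_M_def min_Mbar_def max_Mbar_def)
  ultimately show ?thesis
    using \<open>max_M > 0\<close> \<open>min_Mbar > 0\<close> by (simp add: divide_le_eq)
qed

section \<open>Assembly\<close>

lemma gather_mat_carrier: "gather_mat m n f \<in> carrier_mat m n"
  by (simp add: gather_mat_def)

lemma gather_mat_mult_vec:
  assumes f: "\<And>k. k < m \<Longrightarrow> f k < n" and x: "x \<in> carrier_vec n"
  shows "gather_mat m n f *\<^sub>v x = vec m (\<lambda>k. x $ f k)"
proof (rule eq_vecI)
  fix k assume "k < dim_vec (vec m (\<lambda>k. x $ f k))"
  then have k: "k < m" by simp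
  have "(gather_mat m n f *\<^sub>v x) $ k = (\<Sum>j<n. (if j = f k then 1 else 0) * x $ j)"
    using x k by (simp add: gather_mat_def scalar_prod_def atLeast0LessThan)
  also have "\<dots> = (\<Sum>j<n. if j = f k then x $ j else 0)"
    by (rule sum.cong) auto
  finally show "(gather_mat m n f *\<^sub>v x) $ k = vec m (\<lambda>k. x $ f k) $ k" using f[OF k] k by simp
qed (simp add: gather_mat_def)

lemma assemble_carrier: "assemble m n N idx Ae \<in> carrier_mat n n"
  by (simp add: assemble_def)

lemma assemble_sym:
  assumes A: "\<And>e. e < N \<Longrightarrow> Ae e \<in> carrier_mat m m"
    and sym: "\<And>e. e < N \<Longrightarrow> transpose_mat (Ae e) = Ae e"
  shows "transpose_mat (assemble m n N idx Ae) = assemble m n N idx Ae"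
proof -
  let ?B = "\<lambda>e. transpose_mat (gather_mat m n (idx e)) * Ae e * gather_mat m n (idx e)"
  have "?B e $$ (j, i) = ?B e $$ (i, j)" if "e < N" "i < n" "j < n" for e i j
  proof -
    have "?B e \<in> carrier_mat n n" using congruence_carrier[OF gather_mat_carrier A[OF that(1)]] .
    then have "?B e $$ (j, i) = transpose_mat (?B e) $$ (i, j)"
      using that by (metis carrier_matD index_transpose_mat(1))
    then show ?thesis using congruence_sym[OF gather_mat_carrier A[OF that(1)] sym[OF that(1)]] by simp
  qed
  then show ?thesis
    unfolding assemble_def by (intro eq_matI) (auto intro!: sum.cong)
qed

lemma quad_form_mat_sum:
  fixes B :: "nat \<Rightarrow> real mat"
  assumes B: "\<And>e. e < N \<Longrightarrow> B e \<in> carrier_mat n n" and x: "x \<in> carrier_vec n"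
  shows "x \<bullet> (mat n n (\<lambda>(i, j). \<Sum>e<N. B e $$ (i, j)) *\<^sub>v x) = (\<Sum>e<N. x \<bullet> (B e *\<^sub>v x))"
proof -
  have "x \<bullet> (mat n n (\<lambda>(i, j). \<Sum>e<N. B e $$ (i, j)) *\<^sub>v x) =
      (\<Sum>i<n. \<Sum>j<n. \<Sum>e<N. x $ i * B e $$ (i, j) * x $ j)"
    using x by (simp add: quad_form_double_sum[of _ n] sum_distrib_left sum_distrib_right)
  also have "\<dots> = (\<Sum>e<N. \<Sum>i<n. \<Sum>j<n. x $ i * B e $$ (i, j) * x $ j)"
    by (subst sum.swap, rule sum.cong, simp, rule sum.swap)
  also have "\<dots> = (\<Sum>e<N. x \<bullet> (B e *\<^sub>v x))"
    using B x by (intro sum.cong refl quad_form_double_sum[symmetric]) auto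
  finally show ?thesis .
qed

lemma assemble_quad_form:
  assumes A: "\<And>e. e < N \<Longrightarrow> Ae e \<in> carrier_mat m m"
    and idx: "\<And>e k. e < N \<Longrightarrow> k < m \<Longrightarrow> idx e k < n" and x: "x \<in> carrier_vec n"
  shows "x \<bullet> (assemble m n N idx Ae *\<^sub>v x) =
    (\<Sum>e<N. vec m (\<lambda>k. x $ idx e k) \<bullet> (Ae e *\<^sub>v vec m (\<lambda>k. x $ idx e k)))"
proof -
  let ?B = "\<lambda>e. transpose_mat (gather_mat m n (idx e)) * Ae e * gather_mat m n (idx e)"
  have "x \<bullet> (assemble m n N idx Ae *\<^sub>v x) = (\<Sum>e<N. x \<bullet> (?B e *\<^sub>v x))"
    unfolding assemble_def using congruence_carrier[OF gather_mat_carrier A] x by (intro quad_form_mat_sum)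
  also have "\<dots> = (\<Sum>e<N. vec m (\<lambda>k. x $ idx e k) \<bullet> (Ae e *\<^sub>v vec m (\<lambda>k. x $ idx e k)))"
    using congruence_scalar_prod[OF gather_mat_carrier A x x] gather_mat_mult_vec[OF idx x] by simp
  finally show ?thesis .
qed

section \<open>Element mass matrices\<close>

lemma kron_carrier:
  "A \<in> carrier_mat a a' \<Longrightarrow> B \<in> carrier_mat b b' \<Longrightarrow> kron A B \<in> carrier_mat (a * b) (a' * b')"
  unfolding kron_def by auto

lemma transpose_smult_mat: "transpose_mat (c \<cdot>\<^sub>m (A :: real mat)) = c \<cdot>\<^sub>m transpose_mat A"
  by (rule eq_matI) auto

lemma kron_sym:
  fixes A F :: "real mat"
  assumes A: "A \<in> carrier_mat a a" "transpose_mat A = A" and F: "F \<in> carrier_mat q q" "transpose_mat F = F"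
  shows "transpose_mat (kron A F) = kron A F"
proof -
  have KC: "kron A F \<in> carrier_mat (a * q) (a * q)" by (rule kron_carrier[OF A(1) F(1)])
  have eA: "A $$ (j, i) = A $$ (i, j)" if "i < a" "j < a" for i j
    using A that by (metis carrier_matD index_transpose_mat(1))
  have eF: "F $$ (j, i) = F $$ (i, j)" if "i < q" "j < q" for i j
    using F that by (metis carrier_matD index_transpose_mat(1))
  show ?thesis
  proof (rule eq_matI)
    fix i j assume "i < dim_row (kron A F)" "j < dim_col (kron A F)"
    then have i: "i < a * q" and j: "j < a * q" using KC by auto
    then have "q > 0" by (cases q) auto
    then have "i div q < a" "j div q < a" "i mod q < q" "j mod q < q"
      using i j less_mult_imp_div_less by auto
    then show "transpose_mat (kron A F) $$ (i, j) = kron A F $$ (i, j)"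
      using i j A F eA eF unfolding kron_def by simp
  qed (use KC in auto)
qed

lemma sum_blocks:
  fixes g :: "nat \<Rightarrow> 'a::comm_monoid_add"
  shows "(\<Sum>k<B * q. g k) = (\<Sum>b<B. \<Sum>j<q. g (j + b * q))"
proof -
  have "(\<Sum>k<B * q. g k) = (\<Sum>b<B. sum g {b * q..<b * q + q})" using sum.nat_group[of g q B] by simp
  also have "\<dots> = (\<Sum>b<B. \<Sum>j<q. g (j + b * q))"
    using sum.shift_bounds_nat_ivl[of g 0 "b * q" q for b] by (simp add: atLeast0LessThan add.commute)
  finally show ?thesis .
qed

lemma kron_one_quad_form:
  fixes F :: "real mat"
  assumes F: "F \<in> carrier_mat q q" and y: "y \<in> carrier_vec (B * q)"
  defines "yb b \<equiv> vec q (\<lambda>j. y $ (j + b * q))"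
  shows "y \<bullet> (kron (1\<^sub>m B) F *\<^sub>v y) = (\<Sum>b<B. yb b \<bullet> (F *\<^sub>v yb b))"
proof -
  let ?E = "kron (1\<^sub>m B) F"
  have idx: "s + b * q < B * q" if "b < B" "s < q" for b s
  proof -
    have "s + b * q < Suc b * q" using that by simp
    also have "\<dots> \<le> B * q" using that by (intro mult_le_mono1) simp
    finally show ?thesis .
  qed
  have ent: "?E $$ (s + b * q, t + b' * q) = (if b = b' then F $$ (s, t) else 0)"
    if "b < B" "b' < B" "s < q" "t < q" for b b' s t
    using idx[of b s] idx[of b' t] that F by (simp add: kron_def)
  have "y \<bullet> (?E *\<^sub>v y) = (\<Sum>b<B. \<Sum>s<q. \<Sum>b'<B. \<Sum>t<q.
      y $ (s + b * q) * ?E $$ (s + b * q, t + b' * q) * y $ (t + b' * q))"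
    using quad_form_double_sum[OF kron_carrier[OF one_carrier_mat F] y] by (simp add: sum_blocks)
  also have "\<dots> = (\<Sum>b<B. \<Sum>s<q. \<Sum>b'<B.
      if b' = b then (\<Sum>t<q. y $ (s + b * q) * F $$ (s, t) * y $ (t + b * q)) else 0)"
    by (intro sum.cong refl) (auto simp: ent)
  also have "\<dots> = (\<Sum>b<B. \<Sum>s<q. \<Sum>t<q. y $ (s + b * q) * F $$ (s, t) * y $ (t + b * q))"
    by (simp add: sum.delta)
  also have "\<dots> = (\<Sum>b<B. yb b \<bullet> (F *\<^sub>v yb b))"
    unfolding yb_def using quad_form_double_sum[OF F vec_carrier] by simp
  finally show ?thesis .
qed

lemma scalar_prod_self_blocks:
  fixes y :: "real vec"
  assumes y: "y \<in> carrier_vec (B * q)"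
  shows "y \<bullet> y = (\<Sum>b<B. vec q (\<lambda>j. y $ (j + b * q)) \<bullet> vec q (\<lambda>j. y $ (j + b * q)))"
  using y sum_blocks[of "\<lambda>k. y $ k * y $ k" B q] by (simp add: scalar_prod_def atLeast0LessThan)

lemma A2_carrier: "A2 \<in> carrier_mat 2 2"
proof -
  have "length [[1, -1], [-1, 1 :: real]] = 2" by simp
  then show ?thesis unfolding A2_def mat_of_rows_list_def by (metis mat_carrier)
qed

lemma G4_carrier: "G4 \<in> carrier_mat 4 4"
proof -
  have "length [[4, 2, 1, 2], [2, 4, 2, 1], [1, 2, 4, 2], [2, 1, 2, 4 :: real]] = 4" by simp
  then show ?thesis unfolding G4_def mat_of_rows_list_def by (metis mat_carrier)
qed

lemma kron_A2_G4_carrier: "kron A2 G4 \<in> carrier_mat 8 8"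
  using kron_carrier[OF A2_carrier G4_carrier] by simp

lemma A2_sym: "transpose_mat A2 = A2"
proof (rule eq_matI)
  fix i j assume "i < dim_row A2" "j < dim_col A2"
  then have "i < 2" "j < 2" using A2_carrier by auto
  then show "transpose_mat A2 $$ (i, j) = A2 $$ (i, j)"
    using A2_carrier by (auto simp: A2_def mat_of_rows_list_def eval_nat_numeral less_Suc_eq)
qed (use A2_carrier in auto)

lemma G4_sym: "transpose_mat G4 = G4"
proof (rule eq_matI)
  fix i j assume "i < dim_row G4" "j < dim_col G4"
  then have "i < 4" "j < 4" using G4_carrier by auto
  then show "transpose_mat G4 $$ (i, j) = G4 $$ (i, j)"
    using G4_carrier by (auto simp: G4_def mat_of_rows_list_def eval_nat_numeral less_Suc_eq)
qed (use G4_carrier in auto)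

lemma sum_lessThan_4: "(\<Sum>s<(4::nat). f s) = f 0 + f 1 + f 2 + f 3"
  by (simp add: eval_nat_numeral)

lemma sum_lessThan_8: "(\<Sum>s<(8::nat). f s) = f 0 + f 1 + f 2 + f 3 + f 4 + f 5 + f 6 + f 7"
  by (simp add: eval_nat_numeral)

lemma G4_quad_form_bounds:
  fixes d :: "real vec"
  assumes d: "d \<in> carrier_vec 4"
  shows "0 \<le> d \<bullet> (G4 *\<^sub>v d)" and "d \<bullet> (G4 *\<^sub>v d) \<le> 9 * (d \<bullet> d)"
proof -
  obtain a b c e where abce: "d $ 0 = a" "d $ 1 = b" "d $ 2 = c" "d $ 3 = e" by blast
  have dd: "d \<bullet> d = a\<^sup>2 + b\<^sup>2 + c\<^sup>2 + e\<^sup>2"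
    using d abce by (simp add: scalar_prod_def atLeast0LessThan sum_lessThan_4 power2_eq_square)
  define q where "q = 4*a*a + 4*b*b + 4*c*c + 4*e*e + 4*a*b + 4*b*c + 4*c*e + 4*e*a + 2*a*c + 2*b*e"
  have form: "d \<bullet> (G4 *\<^sub>v d) = q"
    unfolding quad_form_double_sum[OF G4_carrier d] sum_lessThan_4 using abce
    by (simp add: q_def G4_def mat_of_rows_list_def algebra_simps)
  \<comment> \<open>spectral decomposition of the circulant G4, whose eigenvalues are 9, 1, 3, 3\<close>
  have decomp: "4 * q = 9 * (a+b+c+e)\<^sup>2 + (a-b+c-e)\<^sup>2 + 6 * ((a-c)\<^sup>2 + (b-e)\<^sup>2)"
    "9 * (a\<^sup>2 + b\<^sup>2 + c\<^sup>2 + e\<^sup>2) - q = 2 * (a-b+c-e)\<^sup>2 + 3 * ((a-c)\<^sup>2 + (b-e)\<^sup>2)"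
    by (simp_all add: q_def power2_eq_square algebra_simps)
  have nonneg: "0 \<le> 9 * (a+b+c+e)\<^sup>2 + (a-b+c-e)\<^sup>2 + 6 * ((a-c)\<^sup>2 + (b-e)\<^sup>2)"
    "0 \<le> 2 * (a-b+c-e)\<^sup>2 + 3 * ((a-c)\<^sup>2 + (b-e)\<^sup>2)"
    by simp_all
  show "0 \<le> d \<bullet> (G4 *\<^sub>v d)" unfolding form using decomp(1) nonneg(1) by linarith
  show "d \<bullet> (G4 *\<^sub>v d) \<le> 9 * (d \<bullet> d)" unfolding form dd using decomp(2) nonneg(2) by linarith
qed

lemma kron_A2_G4_quad_form:
  fixes z :: "real vec"
  assumes z: "z \<in> carrier_vec 8"
  shows "z \<bullet> (kron A2 G4 *\<^sub>v z)
    = vec 4 (\<lambda>k. z $ k - z $ (k + 4)) \<bullet> (G4 *\<^sub>v vec 4 (\<lambda>k. z $ k - z $ (k + 4)))"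
proof -
  have "kron A2 G4 $$ (s, t) = A2 $$ (s div 4, t div 4) * G4 $$ (s mod 4, t mod 4)"
    if "s < 8" "t < 8" for s t
    using that by (simp add: kron_def A2_def G4_def mat_of_rows_list_def)
  then have "z \<bullet> (kron A2 G4 *\<^sub>v z)
      = (\<Sum>i<8. \<Sum>j<8. z $ i * (A2 $$ (i div 4, j div 4) * G4 $$ (i mod 4, j mod 4)) * z $ j)"
    unfolding quad_form_double_sum[OF kron_A2_G4_carrier z] by (intro sum.cong refl) simp
  then show ?thesis
    unfolding quad_form_double_sum[OF G4_carrier vec_carrier] sum_lessThan_8 sum_lessThan_4
    by (simp add: A2_def G4_def mat_of_rows_list_def algebra_simps)
qed

lemma kron_A2_G4_quad_form_bounds:
  fixes z :: "real vec"
  assumes z: "z \<in> carrier_vec 8"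
  shows "0 \<le> z \<bullet> (kron A2 G4 *\<^sub>v z)" and "z \<bullet> (kron A2 G4 *\<^sub>v z) \<le> 18 * (z \<bullet> z)"
proof -
  define d where "d = vec 4 (\<lambda>k. z $ k - z $ (k + 4))"
  have d: "d \<in> carrier_vec 4" by (simp add: d_def)
  have "2 * (z \<bullet> z) - d \<bullet> d = (z$0 + z$4)\<^sup>2 + (z$1 + z$5)\<^sup>2 + (z$2 + z$6)\<^sup>2 + (z$3 + z$7)\<^sup>2"
    using z by (simp add: d_def scalar_prod_def atLeast0LessThan sum_lessThan_4 sum_lessThan_8
        power2_eq_square algebra_simps)
  then have "d \<bullet> d \<le> 2 * (z \<bullet> z)"
    by (smt (verit) zero_le_power2)
  then show "0 \<le> z \<bullet> (kron A2 G4 *\<^sub>v z)" and "z \<bullet> (kron A2 G4 *\<^sub>v z) \<le> 18 * (z \<bullet> z)"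
    using G4_quad_form_bounds[OF d] kron_A2_G4_quad_form[OF z] by (auto simp: d_def)
qed

lemma lumped_mass_carrier: "lumped_mass m \<in> carrier_mat 24 24"
  using kron_carrier[OF one_carrier_mat[of 3] smult_carrier_mat[OF one_carrier_mat[of 8]]]
  by (simp add: lumped_mass_def)

lemma mass_correction_carrier: "mass_correction \<beta> m \<in> carrier_mat 24 24"
  using kron_carrier[OF one_carrier_mat[of 3] smult_carrier_mat[OF kron_A2_G4_carrier]]
  by (simp add: mass_correction_def)

lemma lumped_mass_sym: "transpose_mat (lumped_mass m) = lumped_mass m"
  unfolding lumped_mass_def
  by (rule kron_sym[OF one_carrier_mat _ smult_carrier_mat[OF one_carrier_mat]])
    (auto simp: transpose_smult_mat)

lemma mass_correction_sym: "transpose_mat (mass_correction \<beta> m) = mass_correction \<beta> m"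
  unfolding mass_correction_def
  by (rule kron_sym[OF one_carrier_mat _ smult_carrier_mat[OF kron_A2_G4_carrier]])
    (auto simp: transpose_smult_mat kron_sym[OF A2_carrier A2_sym G4_carrier G4_sym])

lemma lumped_mass_quad_form:
  fixes y :: "real vec"
  assumes y: "y \<in> carrier_vec 24"
  shows "y \<bullet> (lumped_mass m *\<^sub>v y) = m / 8 * (y \<bullet> y)"
proof -
  have y': "y \<in> carrier_vec (3 * 8)" using y by simp
  define yb where "yb b = vec 8 (\<lambda>j. y $ (j + b * 8))" for b
  have "y \<bullet> (lumped_mass m *\<^sub>v y) = (\<Sum>b<3. m / 8 * (yb b \<bullet> yb b))"
    unfolding lumped_mass_def kron_one_quad_form[OF smult_carrier_mat[OF one_carrier_mat] y', folded yb_def]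
    by (simp add: smult_mat_mult_vec[OF one_carrier_mat] yb_def)
  then show ?thesis
    unfolding scalar_prod_self_blocks[OF y', folded yb_def] by (simp add: sum_distrib_left)
qed

lemma mass_correction_quad_form_bounds:
  fixes y :: "real vec"
  assumes y: "y \<in> carrier_vec 24" and m: "m \<ge> 0" and \<beta>: "\<beta> \<ge> 0"
  shows "0 \<le> y \<bullet> (mass_correction \<beta> m *\<^sub>v y)"
    and "y \<bullet> (mass_correction \<beta> m *\<^sub>v y) \<le> 9 / 2 * \<beta> * (m / 8 * (y \<bullet> y))"
proof -
  have y': "y \<in> carrier_vec (3 * 8)" using y by simp
  define yb where "yb b = vec 8 (\<lambda>j. y $ (j + b * 8))" for b
  have yb: "yb b \<in> carrier_vec 8" and dim_yb: "dim_vec (yb b) = 8" for b by (simp_all add: yb_def)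
  have E: "y \<bullet> (mass_correction \<beta> m *\<^sub>v y) = (\<Sum>b<3. \<beta> * m / 32 * (yb b \<bullet> (kron A2 G4 *\<^sub>v yb b)))"
    unfolding mass_correction_def
      kron_one_quad_form[OF smult_carrier_mat[OF kron_A2_G4_carrier] y', folded yb_def]
    using yb
    by (simp add: smult_mat_mult_vec[OF kron_A2_G4_carrier] carrier_matD[OF kron_A2_G4_carrier] dim_yb)
  show "0 \<le> y \<bullet> (mass_correction \<beta> m *\<^sub>v y)"
    unfolding E using kron_A2_G4_quad_form_bounds(1)[OF yb] m \<beta> by (intro sum_nonneg) simp
  have "y \<bullet> (mass_correction \<beta> m *\<^sub>v y) \<le> (\<Sum>b<3. \<beta> * m / 32 * (18 * (yb b \<bullet> yb b)))"
    unfolding E using kron_A2_G4_quad_form_bounds(2)[OF yb] m \<beta> by (intro sum_mono mult_left_mono) simp_all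
  then show "y \<bullet> (mass_correction \<beta> m *\<^sub>v y) \<le> 9 / 2 * \<beta> * (m / 8 * (y \<bullet> y))"
    unfolding scalar_prod_self_blocks[OF y', folded yb_def] by (simp add: sum_distrib_left mult.assoc)
qed

lemma assembled_lumped_mass_quad_form:
  fixes x :: "real vec"
  assumes idx: "\<And>e k. e < N \<Longrightarrow> k < 24 \<Longrightarrow> idx e k < n" and x: "x \<in> carrier_vec n"
  shows "x \<bullet> (assemble 24 n N idx (\<lambda>e. lumped_mass (me e)) *\<^sub>v x)
    = (\<Sum>e<N. me e / 8 * (vec 24 (\<lambda>k. x $ idx e k) \<bullet> vec 24 (\<lambda>k. x $ idx e k)))"
  using assemble_quad_form[where N = N and Ae = "\<lambda>e. lumped_mass (me e)" and idx = idx,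
      OF lumped_mass_carrier idx x]
  by (simp add: lumped_mass_quad_form)

lemma assembled_mass_bounds:
  fixes x :: "real vec"
  assumes idx: "\<And>e k. e < N \<Longrightarrow> k < 24 \<Longrightarrow> idx e k < n" and mass: "\<And>e. e < N \<Longrightarrow> me e \<ge> 0"
    and \<beta>: "\<beta> \<ge> 0" and x: "x \<in> carrier_vec n"
  defines "M \<equiv> assemble 24 n N idx (\<lambda>e. lumped_mass (me e))"
    and "Mbar \<equiv> assemble 24 n N idx (\<lambda>e. lumped_mass (me e) + mass_correction \<beta> (me e))"
  shows "x \<bullet> (M *\<^sub>v x) \<le> x \<bullet> (Mbar *\<^sub>v x)"
    and "x \<bullet> (Mbar *\<^sub>v x) \<le> (1 + 9 / 2 * \<beta>) * (x \<bullet> (M *\<^sub>v x))"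
proof -
  let ?y = "\<lambda>e. vec 24 (\<lambda>k. x $ idx e k)"
  have y: "?y e \<in> carrier_vec 24" for e by simp
  have sum_carrier: "lumped_mass m + mass_correction \<beta> m \<in> carrier_mat 24 24" for m
    using lumped_mass_carrier mass_correction_carrier by (meson add_carrier_mat)
  have Mbar_form: "x \<bullet> (Mbar *\<^sub>v x) =
      (\<Sum>e<N. me e / 8 * (?y e \<bullet> ?y e) + ?y e \<bullet> (mass_correction \<beta> (me e) *\<^sub>v ?y e))"
  proof -
    have "?y e \<bullet> ((lumped_mass (me e) + mass_correction \<beta> (me e)) *\<^sub>v ?y e)
        = me e / 8 * (?y e \<bullet> ?y e) + ?y e \<bullet> (mass_correction \<beta> (me e) *\<^sub>v ?y e)" for e
      using add_mult_distrib_mat_vec[OF lumped_mass_carrier mass_correction_carrier y]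
        scalar_prod_add_distrib[OF y mult_mat_vec_carrier[OF lumped_mass_carrier y]
          mult_mat_vec_carrier[OF mass_correction_carrier y]] lumped_mass_quad_form[OF y]
      by simp
    then show ?thesis
      using assemble_quad_form[where N = N and Ae = "\<lambda>e. lumped_mass (me e) + mass_correction \<beta> (me e)"
          and idx = idx, OF sum_carrier idx x]
      by (simp add: Mbar_def)
  qed
  have M_form: "x \<bullet> (M *\<^sub>v x) = (\<Sum>e<N. me e / 8 * (?y e \<bullet> ?y e))"
    unfolding M_def by (rule assembled_lumped_mass_quad_form[OF idx x])
  show "x \<bullet> (M *\<^sub>v x) \<le> x \<bullet> (Mbar *\<^sub>v x)"
    unfolding M_form Mbar_form using mass_correction_quad_form_bounds(1)[OF y] mass \<beta>
    by (intro sum_mono) simp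
  have "x \<bullet> (Mbar *\<^sub>v x) \<le> (\<Sum>e<N. (1 + 9 / 2 * \<beta>) * (me e / 8 * (?y e \<bullet> ?y e)))"
    unfolding Mbar_form
    by (intro sum_mono) (use mass_correction_quad_form_bounds(2)[OF y mass \<beta>] in \<open>auto simp: algebra_simps\<close>)
  then show "x \<bullet> (Mbar *\<^sub>v x) \<le> (1 + 9 / 2 * \<beta>) * (x \<bullet> (M *\<^sub>v x))"
    unfolding M_form by (simp add: sum_distrib_left)
qed

lemma assembled_lumped_mass_spd:
  assumes idx: "\<And>e k. e < N \<Longrightarrow> k < 24 \<Longrightarrow> idx e k < n"
    and cover: "\<And>g. g < n \<Longrightarrow> \<exists>e<N. g \<in> idx e ` {..<24}" and mass: "\<And>e. e < N \<Longrightarrow> me e > 0"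
  shows "spd_mat (assemble 24 n N idx (\<lambda>e. lumped_mass (me e)))"
proof (rule spd_matI[OF assemble_carrier assemble_sym])
  fix x :: "real vec" assume x: "x \<in> carrier_vec n" "x \<noteq> 0\<^sub>v n"
  let ?y = "\<lambda>e. vec 24 (\<lambda>k. x $ idx e k)"
  obtain g where g: "g < n" "x $ g \<noteq> 0" using x by (metis carrier_vecD eq_vecI index_zero_vec)
  then obtain e k where ek: "e < N" "k < 24" "idx e k = g" using cover by blast
  have "?y e \<noteq> 0\<^sub>v 24" using ek g by (metis index_vec index_zero_vec(1))
  then have "me e / 8 * (?y e \<bullet> ?y e) > 0"
    using scalar_prod_self_pos[of "?y e"] mass[OF ek(1)] by simp
  then have "(\<Sum>e<N. me e / 8 * (?y e \<bullet> ?y e)) > 0"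
    using ek(1) mass[THEN less_imp_le] scalar_prod_self_nonneg by (intro sum_pos2[of _ e]) auto
  then show "x \<bullet> (assemble 24 n N idx (\<lambda>e. lumped_mass (me e)) *\<^sub>v x) > 0"
    using assembled_lumped_mass_quad_form[OF idx x(1)] by simp
qed (auto simp: lumped_mass_carrier lumped_mass_sym)

lemma assembled_corrected_mass_spd:
  assumes idx: "\<And>e k. e < N \<Longrightarrow> k < 24 \<Longrightarrow> idx e k < n"
    and cover: "\<And>g. g < n \<Longrightarrow> \<exists>e<N. g \<in> idx e ` {..<24}" and mass: "\<And>e. e < N \<Longrightarrow> me e > 0"
    and \<beta>: "\<beta> \<ge> 0"
  shows "spd_mat (assemble 24 n N idx (\<lambda>e. lumped_mass (me e) + mass_correction \<beta> (me e)))"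
proof (rule spd_mat_mono[OF assembled_lumped_mass_spd[OF idx cover mass] assemble_carrier assemble_carrier])
  show "transpose_mat (assemble 24 n N idx (\<lambda>e. lumped_mass (me e) + mass_correction \<beta> (me e)))
      = assemble 24 n N idx (\<lambda>e. lumped_mass (me e) + mass_correction \<beta> (me e))"
    using lumped_mass_carrier mass_correction_carrier
    by (intro assemble_sym)
      (auto simp: transpose_add[OF lumped_mass_carrier mass_correction_carrier]
        lumped_mass_sym mass_correction_sym)
qed (use assembled_mass_bounds(1)[OF idx less_imp_le[OF mass] \<beta>] in auto)

lemma sqrt_ratio_bounds:
  fixes a b c :: real
  assumes b: "0 < b" and ba: "b \<le> a" and ab: "a \<le> c * b"
  shows "1 \<le> sqrt a / sqrt b" and "sqrt a / sqrt b \<le> sqrt c"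
proof -
  show "1 \<le> sqrt a / sqrt b" using b ba by simp
  have "sqrt a \<le> sqrt c * sqrt b" using ab by (simp flip: real_sqrt_mult)
  then show "sqrt a / sqrt b \<le> sqrt c" using b by (simp add: divide_le_eq)
qed

theorem mainTheorem10:
  fixes n N :: nat and idx :: "nat \<Rightarrow> nat \<Rightarrow> nat" and Ke :: "nat \<Rightarrow> real mat"
    and me :: "nat \<Rightarrow> real" and \<beta> :: real
  assumes n_pos: "0 < n"
    and idx: "\<forall>e<N. inj_on (idx e) {..<24} \<and> idx e ` {..<24} \<subseteq> {..<n}"
    and cover: "\<forall>g<n. \<exists>e<N. g \<in> idx e ` {..<24}"
    and Ke: "\<forall>e<N. Ke e \<in> carrier_mat 24 24 \<and> psd_mat (Ke e)"
    and K_spd: "spd_mat (assemble 24 n N idx Ke)"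
    and beta: "\<beta> \<ge> 0"
    and mass: "\<forall>e<N. me e > 0"
  defines "K \<equiv> assemble 24 n N idx Ke"
    and "M \<equiv> assemble 24 n N idx (\<lambda>e. lumped_mass (me e))"
    and "Mbar \<equiv> assemble 24 n N idx (\<lambda>e. lumped_mass (me e) + mass_correction \<beta> (me e))"
  shows "(\<forall>i<n. 1 \<le> sqrt (gen_eigs K M ! i) / sqrt (gen_eigs K Mbar ! i) \<and>
                 sqrt (gen_eigs K M ! i) / sqrt (gen_eigs K Mbar ! i) \<le> sqrt (1 + 9/2 * \<beta>))
         \<and> cond_num Mbar / cond_num M \<le> 1 + 9/2 * \<beta>"
proof -
  have idx': "\<And>e k. e < N \<Longrightarrow> k < 24 \<Longrightarrow> idx e k < n" using idx by blast
  have K: "spd_mat K" "K \<in> carrier_mat n n" using K_spd by (simp_all add: K_def assemble_carrier)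
  have M: "spd_mat M" "M \<in> carrier_mat n n"
    using assembled_lumped_mass_spd[OF idx'] cover mass by (simp_all add: M_def assemble_carrier)
  have Mbar: "spd_mat Mbar" "Mbar \<in> carrier_mat n n"
    using assembled_corrected_mass_spd[OF idx' _ _ beta] cover mass
    by (simp_all add: Mbar_def assemble_carrier)
  have lower: "x \<bullet> (M *\<^sub>v x) \<le> x \<bullet> (Mbar *\<^sub>v x)"
    and upper: "x \<bullet> (Mbar *\<^sub>v x) \<le> (1 + 9/2 * \<beta>) * (x \<bullet> (M *\<^sub>v x))" if "x \<in> carrier_vec n" for x
    using assembled_mass_bounds[OF idx' _ beta that] mass by (simp_all add: M_def Mbar_def less_imp_le)
  note mono = gen_eigs_mass_mono[OF spd_mat_psd_mat[OF K(1)] K(2)]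
  have "gen_eigs K Mbar ! i \<le> gen_eigs K M ! i" "gen_eigs K M ! i \<le> (1 + 9/2 * \<beta>) * gen_eigs K Mbar ! i"
    "0 < gen_eigs K Mbar ! i" if "i < n" for i
    using mono[OF Mbar M zero_le_one _ that] mono[OF M Mbar _ upper that] lower
      gen_eigs_pos[OF K Mbar that] beta by simp_all
  then show ?thesis
    using sqrt_ratio_bounds cond_num_ratio_le[OF M Mbar n_pos _ lower upper] beta by simp
qed

end
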